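(* For any $\gamma,\alpha\in(0,1)$, there exists $\delta_{\gamma,\alpha}>0$ such that $\omega^*(\mathrm{CLONE}_{\gamma,\alpha})\le (1-\gamma)+\gamma\,\omega^*(\mathrm{CHSH})-\delta_{\gamma,\alpha}$.
   Context: $\omega^*(G)$ denotes the quantum value (supremum of winning probabilities over quantum strategies) of a game $G$. $\omega^*(\mathrm{CHSH})=\frac12\left(1+\frac1{\sqrt2}\right)$ is the quantum value of the CHSH game (inputs $x,y\in\{0,1\}$ uniform, outputs $a,b\in\{0,1\}$, win iff $a\oplus b=x\cdot y$). The game $\mathrm{CLONE}_{\gamma,\alpha}$ has four players Alice, Barlie, Bob, Charlie. Initially Alice and Barlie share an arbitrary entangled state. Round 1 (no communication): Alice receives uniform $x\in\{0,1\}$; Barlie independently receives $u\in\{0,1,\mathrm{keep}\}$ with $\Pr[u=\mathrm{keep}]=1-\gamma$, $\Pr[u=0]=\Pr[u=1]=\gamma/2$; Alice outputs $a\in\{0,1\}$ and Barlie outputs $s\in\{0,1\}$. Then Barlie applies an arbitrary channel to his registers and distributes the result between Bob and Charlie, who do not communicate afterwards. Round 2: Bob receives $y$ and Charlie receives $z$, where independently $y=\perp$ with probability $\alpha$ and $y=x$ otherwise, and likewise $z=\perp$ with probability $\alpha$ and $z=x$ otherwise; they output $b,c\in\{0,1\}$. The players win iff either ($u\neq\mathrm{keep}$ and $a\oplus s=x\cdot u$) or ($u=\mathrm{keep}$ and ($y=\perp$ or $z=\perp$ or $b=c=a$)). *)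

theory Defs
  imports "Jordan_Normal_Form.Matrix"
begin

definition ctrace :: "complex mat \<Rightarrow> complex" where
  "ctrace M = (\<Sum>i<dim_row M. M $$ (i, i))"

definition adj :: "complex mat \<Rightarrow> complex mat" where
  "adj M = mat (dim_col M) (dim_row M) (\<lambda>(i, j). cnj (M $$ (j, i)))"

definition msum :: "nat \<Rightarrow> nat \<Rightarrow> ('i \<Rightarrow> complex mat) \<Rightarrow> 'i set \<Rightarrow> complex mat" where
  "msum r c F I = mat r c (\<lambda>(i, j). \<Sum>k\<in>I. F k $$ (i, j))"

definition kron :: "complex mat \<Rightarrow> complex mat \<Rightarrow> complex mat" where
  "kron A B = mat (dim_row A * dim_row B) (dim_col A * dim_col B)
     (\<lambda>(i, j). A $$ (i div dim_row B, j div dim_col B) * B $$ (i mod dim_row B, j mod dim_col B))"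

definition psd :: "nat \<Rightarrow> complex mat \<Rightarrow> bool" where
  "psd n M \<longleftrightarrow> M \<in> carrier_mat n n \<and>
     (\<forall>v :: nat \<Rightarrow> complex.
        let q = (\<Sum>i<n. \<Sum>j<n. cnj (v i) * M $$ (i, j) * v j) in Im q = 0 \<and> Re q \<ge> 0)"

definition density :: "nat \<Rightarrow> complex mat \<Rightarrow> bool" where
  "density n \<rho> \<longleftrightarrow> psd n \<rho> \<and> ctrace \<rho> = 1"

definition povm2 :: "nat \<Rightarrow> (nat \<Rightarrow> complex mat) \<Rightarrow> bool" where
  "povm2 n E \<longleftrightarrow> psd n (E 0) \<and> psd n (E 1) \<and> E 0 + E 1 = 1\<^sub>m n"

text \<open>Barlie's question u: Some 0, Some 1, or None (= keep).\<close>

text \<open>A quantum strategy for CLONE (finite dimensional, tensor-product model).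
  dA, dB: dimensions of Alice's and Barlie's registers; dP, dQ: dimensions of
  Bob's and Charlie's registers; rho: shared state on C^dA (x) C^dB.
  A x: Alice's POVM on input x.  Barlie, on question u, applies a quantum instrument
  C^dB -> C^dP (x) C^dQ with outcome s, given by Kraus operators K u s k (k < nK);
  this composes Barlie's measurement with the subsequent channel distributing his
  registers to Bob and Charlie (which may depend on u and s).
  P y, Q z: Bob's and Charlie's POVMs on input x (input \<bottom> never matters for winning).\<close>

definition clone_strategy ::
  "nat \<Rightarrow> nat \<Rightarrow> nat \<Rightarrow> nat \<Rightarrow> nat \<Rightarrow> complex mat \<Rightarrow> (nat \<Rightarrow> nat \<Rightarrow> complex mat)
   \<Rightarrow> (nat option \<Rightarrow> nat \<Rightarrow> nat \<Rightarrow> complex mat)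
   \<Rightarrow> (nat \<Rightarrow> nat \<Rightarrow> complex mat) \<Rightarrow> (nat \<Rightarrow> nat \<Rightarrow> complex mat) \<Rightarrow> bool" where
  "clone_strategy dA dB dP dQ nK \<rho> A K P Q \<longleftrightarrow>
     dA > 0 \<and> dB > 0 \<and> dP > 0 \<and> dQ > 0 \<and>
     density (dA * dB) \<rho> \<and>
     (\<forall>x\<in>{0,1}. povm2 dA (A x)) \<and>
     (\<forall>y\<in>{0,1}. povm2 dP (P y)) \<and>
     (\<forall>z\<in>{0,1}. povm2 dQ (Q z)) \<and>
     (\<forall>u\<in>{Some 0, Some 1, None}. \<forall>s\<in>{0,1}. \<forall>k<nK. K u s k \<in> carrier_mat (dP * dQ) dB) \<and>
     (\<forall>u\<in>{Some 0, Some 1, None}.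
        msum dB dB (\<lambda>(s, k). adj (K u s k) * K u s k) ({0::nat,1} \<times> {..<nK}) = 1\<^sub>m dB)"

definition round1_prob ::
  "nat \<Rightarrow> nat \<Rightarrow> nat \<Rightarrow> complex mat \<Rightarrow> (nat \<Rightarrow> nat \<Rightarrow> complex mat)
   \<Rightarrow> (nat option \<Rightarrow> nat \<Rightarrow> nat \<Rightarrow> complex mat) \<Rightarrow> nat \<Rightarrow> nat \<Rightarrow> nat option \<Rightarrow> nat \<Rightarrow> real" where
  "round1_prob dA dB nK \<rho> A K x a u s =
     Re (ctrace (kron (A x a) (msum dB dB (\<lambda>k. adj (K u s k) * K u s k) {..<nK}) * \<rho>))"

text \<open>Probability, for u = keep and y = z = x, that Alice outputs a, Barlie outputs s,
  and Bob and Charlie both output a.\<close>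
definition keep_prob ::
  "nat \<Rightarrow> nat \<Rightarrow> nat \<Rightarrow> nat \<Rightarrow> complex mat \<Rightarrow> (nat \<Rightarrow> nat \<Rightarrow> complex mat)
   \<Rightarrow> (nat option \<Rightarrow> nat \<Rightarrow> nat \<Rightarrow> complex mat)
   \<Rightarrow> (nat \<Rightarrow> nat \<Rightarrow> complex mat) \<Rightarrow> (nat \<Rightarrow> nat \<Rightarrow> complex mat)
   \<Rightarrow> nat \<Rightarrow> nat \<Rightarrow> nat \<Rightarrow> real" where
  "keep_prob dA dP dQ nK \<rho> A K P Q x a s =
     Re (ctrace (kron (A x a) (kron (P x a) (Q x a)) *
        msum (dA * (dP * dQ)) (dA * (dP * dQ))
          (\<lambda>k. kron (1\<^sub>m dA) (K None s k) * \<rho> * adj (kron (1\<^sub>m dA) (K None s k))) {..<nK}))"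

definition clone_win_prob ::
  "real \<Rightarrow> real \<Rightarrow> nat \<Rightarrow> nat \<Rightarrow> nat \<Rightarrow> nat \<Rightarrow> nat \<Rightarrow> complex mat \<Rightarrow> (nat \<Rightarrow> nat \<Rightarrow> complex mat)
   \<Rightarrow> (nat option \<Rightarrow> nat \<Rightarrow> nat \<Rightarrow> complex mat)
   \<Rightarrow> (nat \<Rightarrow> nat \<Rightarrow> complex mat) \<Rightarrow> (nat \<Rightarrow> nat \<Rightarrow> complex mat) \<Rightarrow> real" where
  "clone_win_prob \<gamma> \<alpha> dA dB dP dQ nK \<rho> A K P Q =
     (\<Sum>x\<in>{0::nat,1}. (1/2) *
        ( (\<Sum>u\<in>{0::nat,1}. (\<gamma>/2) *
              (\<Sum>a\<in>{0::nat,1}. \<Sum>s\<in>{0::nat,1}.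
                 if (a + s) mod 2 = x * u then round1_prob dA dB nK \<rho> A K x a (Some u) s else 0))
        + (1 - \<gamma>) * ((1 - (1 - \<alpha>)^2)
             + (1 - \<alpha>)^2 * (\<Sum>a\<in>{0::nat,1}. \<Sum>s\<in>{0::nat,1}.
                                  keep_prob dA dP dQ nK \<rho> A K P Q x a s))))"

definition clone_value :: "real \<Rightarrow> real \<Rightarrow> real" where
  "clone_value \<gamma> \<alpha> = Sup {clone_win_prob \<gamma> \<alpha> dA dB dP dQ nK \<rho> A K P Q | dA dB dP dQ nK \<rho> A K P Q.
        clone_strategy dA dB dP dQ nK \<rho> A K P Q}"

definition chsh_value :: real where
  "chsh_value = (1 + 1 / sqrt 2) / 2"

end

theory Submission
  imports Defs
begin

(* Write all measurements as observables (differences of the two effects of a POVM) and all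
   probabilities as expectations in the shared state. The winning probability then equals
   (1 - gamma) + gamma omega*(CHSH) - gamma/8 e_CHSH - (1 - gamma)(1 - alpha)^2/8 e_keep, where
   e_CHSH >= 0 is the gap between the round-one CHSH correlation and Tsirelson's bound 2 sqrt 2, and
   e_keep >= 0 measures how far Bob and Charlie are from both reproducing Alice's outcome.
   For the state seminorm ||X||^2 = Re tr(X^H X rho), the sum-of-squares certificate of Tsirelson's
   bound shows that a small CHSH gap makes Alice's observables nearly anticommute:
   ||A0 A1 + A1 A0||^2 <= 34 e_CHSH. Conversely, if Bob's observable P0 reproduces A0 and Charlie's
   Q1 reproduces A1, then A0 A1 + A1 A0 is close to 2 P0 Q1, a product of commuting contractions of
   norm close to 1, so ||A0 A1 + A1 A0||^2 >= 2 - 20 e_keep. Barlie's channel does not act on Alice's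
   side, so both norms are the same, whence 34 e_CHSH + 20 e_keep >= 2 and the winning probability
   stays min(gamma, (1 - gamma)(1 - alpha)^2)/136 below (1 - gamma) + gamma omega*(CHSH). *)

section \<open>Gram factorisation of positive semidefinite forms\<close>

text \<open>Matrices are taken as functions \<open>nat \<Rightarrow> nat \<Rightarrow> complex\<close> here, so that the
  Schur-complement induction can shrink the dimension without repackaging matrices.\<close>

definition quad_form :: "nat \<Rightarrow> (nat \<Rightarrow> nat \<Rightarrow> complex) \<Rightarrow> (nat \<Rightarrow> complex) \<Rightarrow> complex" where
  "quad_form n M v = (\<Sum>i<n. \<Sum>j<n. cnj (v i) * M i j * v j)"

definition psd_form :: "nat \<Rightarrow> (nat \<Rightarrow> nat \<Rightarrow> complex) \<Rightarrow> bool" where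
  "psd_form n M \<longleftrightarrow> (\<forall>v. Im (quad_form n M v) = 0 \<and> Re (quad_form n M v) \<ge> 0)"

lemma sum_two_point:
  fixes g :: "nat \<Rightarrow> complex"
  assumes "i < n" "j < n"
  shows "(\<Sum>k<n. ((if k = i then a else 0) + (if k = j then b else 0)) * g k) = a * g i + b * g j"
proof -
  have "(\<Sum>k<n. ((if k = i then a else 0) + (if k = j then b else 0)) * g k)
      = (\<Sum>k<n. if k = i then a * g k else 0) + (\<Sum>k<n. if k = j then b * g k else 0)"
    by (subst sum.distrib[symmetric], rule sum.cong) (auto simp: algebra_simps)
  then show ?thesis using assms by (simp add: sum.delta)
qed

lemma quad_form_two_point:
  assumes "i < n" "j < n"
  shows "quad_form n M (\<lambda>k. (if k = i then a else 0) + (if k = j then b else 0)) =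
    cnj a * a * M i i + cnj a * b * M i j + cnj b * a * M j i + cnj b * b * M j j"
proof -
  let ?v = "\<lambda>k. (if k = i then a else 0) + (if k = j then b else 0)"
  have "quad_form n M ?v = (\<Sum>k<n. cnj (?v k) * (\<Sum>l<n. ?v l * M k l))"
    unfolding quad_form_def by (simp add: sum_distrib_left algebra_simps)
  also have "\<dots> = (\<Sum>k<n. cnj (?v k) * (a * M k i + b * M k j))"
    using sum_two_point[OF assms, of a b "M _"] by simp
  also have "\<dots> = (\<Sum>k<n. ((if k = i then cnj a else 0) + (if k = j then cnj b else 0)) * (a * M k i + b * M k j))"
    by (intro sum.cong) auto
  also have "\<dots> = cnj a * (a * M i i + b * M i j) + cnj b * (a * M j i + b * M j j)"
    by (rule sum_two_point[OF assms])
  finally show ?thesis by (simp add: algebra_simps)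
qed

lemma quad_form_Suc:
  "quad_form (Suc n) M w = quad_form n M w + (\<Sum>i<n. cnj (w i) * M i n) * w n
     + cnj (w n) * (\<Sum>j<n. M n j * w j) + cnj (w n) * M n n * w n"
  unfolding quad_form_def
  by (simp add: sum.distrib sum_distrib_left sum_distrib_right algebra_simps)

lemma quad_form_cong: "(\<And>i. i < n \<Longrightarrow> v i = w i) \<Longrightarrow> quad_form n M v = quad_form n M w"
  unfolding quad_form_def by (intro sum.cong refl) auto

lemma psd_form_diag:
  assumes "psd_form n M" "i < n"
  shows "M i i = of_real (Re (M i i))" "Re (M i i) \<ge> 0"
proof -
  have "quad_form n M (\<lambda>k. (if k = i then 1 else 0) + (if k = i then 0 else 0)) = M i i"
    using quad_form_two_point[OF assms(2) assms(2), of M 1 0] by simp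
  then have "Im (M i i) = 0" "Re (M i i) \<ge> 0" using assms(1) unfolding psd_form_def by metis+
  then show "M i i = of_real (Re (M i i))" "Re (M i i) \<ge> 0" by (simp_all add: complex_eq_iff)
qed

lemma psd_form_hermitian:
  assumes "psd_form n M" "i < n" "j < n"
  shows "M j i = cnj (M i j)"
proof -
  have "Im (quad_form n M (\<lambda>k. (if k = i then 1 else 0) + (if k = j then 1 else 0))) = 0"
    and "Im (quad_form n M (\<lambda>k. (if k = i then 1 else 0) + (if k = j then \<i> else 0))) = 0"
    using assms(1) unfolding psd_form_def by blast+
  moreover have "Im (M i i) = 0" "Im (M j j) = 0"
    using psd_form_diag(1)[OF assms(1)] assms(2,3) by (metis Im_complex_of_real)+
  ultimately have "Im (M i j + M j i) = 0" "Re (M i j - M j i) = 0"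
    unfolding quad_form_two_point[OF assms(2,3)] by simp_all
  then show ?thesis by (simp add: complex_eq_iff)
qed

lemma psd_form_Suc_restrict:
  assumes "psd_form (Suc n) M"
  shows "psd_form n M"
  unfolding psd_form_def
proof
  fix v
  have "quad_form (Suc n) M (v(n := 0)) = quad_form n M v"
    unfolding quad_form_Suc by (simp add: quad_form_cong[of n "v(n := 0)" v])
  then show "Im (quad_form n M v) = 0 \<and> 0 \<le> Re (quad_form n M v)"
    using assms unfolding psd_form_def by metis
qed

text \<open>A vanishing diagonal entry forces its column to vanish: test the form on
  \<open>x e\<^sub>i + e\<^sub>n\<close> with \<open>x = - s M\<^sub>i\<^sub>n\<close> for small \<open>s > 0\<close>.\<close>

lemma psd_form_zero_diag:
  assumes psd: "psd_form (Suc n) M" and zero: "M n n = 0" and i: "i < n"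
  shows "M i n = 0"
proof (rule ccontr)
  assume ne: "M i n \<noteq> 0"
  define m where "m = M i n"
  define d where "d = Re (M i i)"
  define s :: real where "s = 1 / (d + 1)"
  have d: "M i i = of_real d" "d \<ge> 0" using psd_form_diag[OF psd, of i] i unfolding d_def by auto
  have s: "s > 0" "s * d < 1" using d(2) unfolding s_def by (auto simp: field_simps)
  have herm: "M n i = cnj m" using psd_form_hermitian[OF psd, of i n] i unfolding m_def by simp
  define x where "x = - of_real s * m"
  have "Re (quad_form (Suc n) M (\<lambda>k. (if k = i then x else 0) + (if k = n then 1 else 0))) \<ge> 0"
    using psd unfolding psd_form_def by blast
  also have "quad_form (Suc n) M (\<lambda>k. (if k = i then x else 0) + (if k = n then 1 else 0)) =
      cnj x * x * of_real d + cnj x * m + cnj m * x"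
    using quad_form_two_point[of i "Suc n" n M x 1] i zero d(1) herm unfolding m_def by simp
  also have "Re \<dots> = s * ((Re m)\<^sup>2 + (Im m)\<^sup>2) * (s * d - 2)"
    unfolding x_def by (simp add: algebra_simps power2_eq_square)
  finally have "0 \<le> s * ((Re m)\<^sup>2 + (Im m)\<^sup>2) * (s * d - 2)" .
  moreover have "s * ((Re m)\<^sup>2 + (Im m)\<^sup>2) > 0"
    using ne s(1) unfolding m_def by (simp add: complex_eq_iff sum_power2_gt_zero_iff)
  ultimately show False using s(2) by (simp add: zero_le_mult_iff)
qed

lemma psd_form_schur_complement:
  assumes psd: "psd_form (Suc n) M" and pos: "Re (M n n) > 0"
  shows "psd_form n (\<lambda>i j. M i j - M i n * M n j / M n n)"
  unfolding psd_form_def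
proof
  fix v
  define a where "a = M n n"
  define \<beta> where "\<beta> = (\<Sum>j<n. M n j * v j)"
  define w where "w = v(n := - \<beta> / a)"
  have a0: "a \<noteq> 0" using pos unfolding a_def by auto
  have ca: "cnj a = a" using psd_form_diag(1)[OF psd, of n] unfolding a_def
    by (metis complex_cnj_complex_of_real lessI)
  have col: "(\<Sum>i<n. cnj (v i) * M i n) = cnj \<beta>"
    unfolding \<beta>_def cnj_sum using psd_form_hermitian[OF psd, of _ n]
    by (intro sum.cong refl) (simp add: mult.commute)
  have "quad_form (Suc n) M w = quad_form n M v + cnj \<beta> * (- \<beta> / a) + cnj (- \<beta> / a) * \<beta>
      + cnj (- \<beta> / a) * a * (- \<beta> / a)"
    unfolding quad_form_Suc w_def quad_form_cong[of n "v(n := _)" v, simplified] a_def[symmetric]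
    using col unfolding \<beta>_def by simp
  also have "\<dots> = quad_form n M v - (\<Sum>i<n. cnj (v i) * M i n) * (\<Sum>j<n. M n j * v j) / a"
    unfolding col \<beta>_def[symmetric] using a0 ca by (simp add: field_simps)
  also have "\<dots> = quad_form n (\<lambda>i j. M i j - M i n * M n j / M n n) v"
    unfolding quad_form_def a_def sum_product
    by (simp add: sum_subtractf sum_divide_distrib algebra_simps diff_divide_distrib)
  finally have "quad_form (Suc n) M w = quad_form n (\<lambda>i j. M i j - M i n * M n j / M n n) v" .
  then show "Im (quad_form n (\<lambda>i j. M i j - M i n * M n j / M n n) v) = 0 \<and>
      0 \<le> Re (quad_form n (\<lambda>i j. M i j - M i n * M n j / M n n) v)"
    using psd unfolding psd_form_def by metis
qed

definition gram_factor :: "nat \<Rightarrow> (nat \<Rightarrow> nat \<Rightarrow> complex) \<Rightarrow> (nat \<Rightarrow> nat \<Rightarrow> complex) \<Rightarrow> bool" where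
  "gram_factor n M W \<longleftrightarrow> (\<forall>i<n. \<forall>j<n. M i j = (\<Sum>k<n. W i k * cnj (W j k)))"

lemma gram_factor_extend_zero_pivot:
  assumes psd: "psd_form (Suc n) M" and zero: "M n n = 0" and W: "gram_factor n M W"
  shows "gram_factor (Suc n) M (\<lambda>i k. if i < n \<and> k < n then W i k else 0)"
  unfolding gram_factor_def
proof (intro allI impI)
  fix i j assume i: "i < Suc n" and j: "j < Suc n"
  have col: "M i n = 0" if "i < Suc n" for i
    using psd_form_zero_diag[OF psd zero, of i] zero that by (cases "i = n") auto
  show "M i j = (\<Sum>k<Suc n. (if i < n \<and> k < n then W i k else 0) * cnj (if j < n \<and> k < n then W j k else 0))"
  proof (cases "i < n \<and> j < n")
    case True
    then show ?thesis using W unfolding gram_factor_def by (auto intro!: sum.cong)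
  next
    case False
    then have "i = n \<or> j = n" using i j by auto
    then have "M i j = 0"
      using col[OF i] col[OF j] psd_form_hermitian[OF psd, of j n] j by auto
    then show ?thesis using False by (auto intro!: sum.neutral)
  qed
qed

lemma gram_factor_extend_pos_pivot:
  assumes psd: "psd_form (Suc n) M" and pos: "Re (M n n) > 0"
    and W: "gram_factor n (\<lambda>i j. M i j - M i n * M n j / M n n) W"
  shows "gram_factor (Suc n) M
    (\<lambda>i k. if k < n then (if i < n then W i k else 0) else M i n / of_real (sqrt (Re (M n n))))"
  unfolding gram_factor_def
proof (intro allI impI)
  fix i j assume i: "i < Suc n" and j: "j < Suc n"
  define r where "r = sqrt (Re (M n n))"
  have r: "r > 0" "of_real r * of_real r = M n n"
    using pos psd_form_diag(1)[OF psd, of n] unfolding r_def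
    by (auto simp flip: of_real_mult)
  have last: "M i n / of_real r * cnj (M j n / of_real r) = M i n * M n j / M n n"
    using psd_form_hermitian[OF psd, of j n] j r by (simp add: field_simps)
  let ?W' = "\<lambda>i k. if k < n then (if i < n then W i k else 0) else M i n / of_real r"
  have split: "(\<Sum>k<Suc n. ?W' i k * cnj (?W' j k)) =
      (\<Sum>k<n. ?W' i k * cnj (?W' j k)) + M i n * M n j / M n n"
    using last by simp
  have "M i j = (\<Sum>k<Suc n. ?W' i k * cnj (?W' j k))"
  proof (cases "i < n \<and> j < n")
    case True
    then have "(\<Sum>k<n. ?W' i k * cnj (?W' j k)) = (\<Sum>k<n. W i k * cnj (W j k))"
      by (intro sum.cong) auto
    then show ?thesis unfolding split using W True unfolding gram_factor_def
      by (simp add: diff_eq_eq)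
  next
    case False
    then have "i = n \<or> j = n" using i j by auto
    moreover have "M n n \<noteq> 0" using pos by auto
    ultimately show ?thesis unfolding split using False by (auto intro!: sum.neutral)
  qed
  then show "M i j = (\<Sum>k<Suc n. (if k < n then (if i < n then W i k else 0)
      else M i n / of_real (sqrt (Re (M n n)))) * cnj (if k < n then (if j < n then W j k else 0)
      else M j n / of_real (sqrt (Re (M n n)))))"
    unfolding r_def .
qed

lemma psd_form_gram_factor: "psd_form n M \<Longrightarrow> \<exists>W. gram_factor n M W"
proof (induction n arbitrary: M)
  case 0
  then show ?case by (simp add: gram_factor_def)
next
  case (Suc n)
  show ?case
  proof (cases "Re (M n n) = 0")
    case True
    then have "M n n = 0" using psd_form_diag(1)[OF Suc.prems, of n] by simp
    moreover obtain W where "gram_factor n M W"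
      using Suc.IH[OF psd_form_Suc_restrict[OF Suc.prems]] by blast
    ultimately show ?thesis using gram_factor_extend_zero_pivot[OF Suc.prems] by blast
  next
    case False
    then have pos: "Re (M n n) > 0" using psd_form_diag(2)[OF Suc.prems, of n] by simp
    obtain W where "gram_factor n (\<lambda>i j. M i j - M i n * M n j / M n n) W"
      using Suc.IH[OF psd_form_schur_complement[OF Suc.prems pos]] by blast
    then show ?thesis using gram_factor_extend_pos_pivot[OF Suc.prems pos] by blast
  qed
qed

section \<open>Conjugate transpose, Kronecker product, trace and finite sums\<close>

lemma index_mult_mat_sum:
  assumes "A \<in> carrier_mat m n" "B \<in> carrier_mat n p" "i < m" "j < p"
  shows "(A * B) $$ (i, j) = (\<Sum>k<n. A $$ (i, k) * B $$ (k, j))"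
  using assms by (simp add: scalar_prod_def atLeast0LessThan)

lemma add_mult_distrib_dim:
  "dim_row A = dim_row B \<Longrightarrow> dim_col A = dim_col B \<Longrightarrow> dim_col B = dim_row C \<Longrightarrow>
    ((A :: complex mat) + B) * C = A * C + B * C"
  by (rule add_mult_distrib_mat[of _ "dim_row B" "dim_col B" _ _ "dim_col C"]) auto

lemma mult_add_distrib_dim:
  "dim_row A = dim_row B \<Longrightarrow> dim_col A = dim_col B \<Longrightarrow> dim_col C = dim_row B \<Longrightarrow>
    (C :: complex mat) * (A + B) = C * A + C * B"
  by (rule mult_add_distrib_mat[of _ "dim_row C" "dim_row B" _ "dim_col B"]) auto

lemma minus_mult_distrib_dim:
  "dim_row A = dim_row B \<Longrightarrow> dim_col A = dim_col B \<Longrightarrow> dim_col B = dim_row C \<Longrightarrow>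
    ((A :: complex mat) - B) * C = A * C - B * C"
  by (rule minus_mult_distrib_mat[of _ "dim_row B" "dim_col B" _ _ "dim_col C"]) auto

lemma mult_minus_distrib_dim:
  "dim_row A = dim_row B \<Longrightarrow> dim_col A = dim_col B \<Longrightarrow> dim_col C = dim_row B \<Longrightarrow>
    (C :: complex mat) * (A - B) = C * A - C * B"
  by (rule mult_minus_distrib_mat[of _ "dim_row C" "dim_row B" _ "dim_col B"]) auto

lemma smult_mult_dim: "dim_col A = dim_row C \<Longrightarrow> (k \<cdot>\<^sub>m (A :: complex mat)) * C = k \<cdot>\<^sub>m (A * C)"
  by (rule mult_smult_assoc_mat[of _ "dim_row A" "dim_col A" _ "dim_col C"]) auto

lemma mult_smult_dim: "dim_col C = dim_row A \<Longrightarrow> (C :: complex mat) * (k \<cdot>\<^sub>m A) = k \<cdot>\<^sub>m (C * A)"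
  by (rule mult_smult_distrib[of _ "dim_row C" "dim_row A" _ "dim_col A"]) auto

lemma assoc_mult_dim:
  "dim_col A = dim_row B \<Longrightarrow> dim_col B = dim_row C \<Longrightarrow> ((A :: complex mat) * B) * C = A * (B * C)"
  by (rule assoc_mult_mat[of _ "dim_row A" "dim_col A" _ "dim_col B" _ "dim_col C"]) auto

lemmas mat_ring_distribs_dim = add_mult_distrib_dim mult_add_distrib_dim minus_mult_distrib_dim
  mult_minus_distrib_dim smult_mult_dim mult_smult_dim assoc_mult_dim

lemma adj_carrier [simp]: "A \<in> carrier_mat m n \<Longrightarrow> adj A \<in> carrier_mat n m"
  unfolding adj_def by auto

lemma adj_dims [simp]: "dim_row (adj A) = dim_col A" "dim_col (adj A) = dim_row A"
  unfolding adj_def by auto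

lemma adj_index [simp]: "i < dim_col A \<Longrightarrow> j < dim_row A \<Longrightarrow> adj A $$ (i, j) = cnj (A $$ (j, i))"
  unfolding adj_def by auto

lemma adj_adj [simp]: "adj (adj A) = A"
  by (rule eq_matI) auto

lemma adj_one [simp]: "adj (1\<^sub>m n) = 1\<^sub>m n"
  by (rule eq_matI) auto

lemma adj_mult:
  assumes "A \<in> carrier_mat m n" "B \<in> carrier_mat n p"
  shows "adj (A * B) = adj B * adj A"
proof (rule eq_matI)
  fix i j assume "i < dim_row (adj B * adj A)" "j < dim_col (adj B * adj A)"
  then have ij: "i < p" "j < m" using assms by auto
  have "adj (A * B) $$ (i, j) = cnj (\<Sum>k<n. A $$ (j, k) * B $$ (k, i))"
    using index_mult_mat_sum[OF assms] ij assms by simp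
  also have "\<dots> = (\<Sum>k<n. adj B $$ (i, k) * adj A $$ (k, j))"
    unfolding cnj_sum using assms ij by (intro sum.cong refl) (simp add: mult.commute)
  also have "\<dots> = (adj B * adj A) $$ (i, j)"
    using index_mult_mat_sum[of "adj B" p n "adj A" m i j] assms ij by simp
  finally show "adj (A * B) $$ (i, j) = (adj B * adj A) $$ (i, j)" .
qed (use assms in auto)

lemma adj_add: "dim_row A = dim_row B \<Longrightarrow> dim_col A = dim_col B \<Longrightarrow> adj (A + B) = adj A + adj B"
  by (rule eq_matI) auto

lemma adj_minus: "dim_row A = dim_row B \<Longrightarrow> dim_col A = dim_col B \<Longrightarrow> adj (A - B) = adj A - adj B"
  by (rule eq_matI) auto

lemma adj_smult: "adj (c \<cdot>\<^sub>m A) = cnj c \<cdot>\<^sub>m adj A"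
  by (rule eq_matI) auto

lemma mod_less_of_less_mult: "(i::nat) < a * c \<Longrightarrow> i mod c < c"
  by (metis mod_less_divisor mult_zero_right not_gr_zero not_less_zero)

lemma sum_lessThan_mult:
  "sum h {..<a * b :: nat} = (\<Sum>i<a. \<Sum>j<b. h (j + i * b))"
  unfolding sum.nat_group[of h b a, unfolded atLeast0LessThan, symmetric]
proof (rule sum.cong, simp, rule sum.reindex_cong)
  fix i
  show "inj_on (\<lambda>j. j + i * b) {..<b}" by (auto intro!: inj_onI)
  show "{i * b..<i * b + b} = (\<lambda>j. j + i * b) ` {..<b}"
  proof safe
    fix j assume "j \<in> {i * b..<i * b + b}"
    then show "j \<in> (\<lambda>j. j + i * b) ` {..<b}"
      by (auto intro!: image_eqI[of _ _ "j - i * b"])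
  qed simp
qed simp

lemma kron_dims [simp]:
  "dim_row (kron A B) = dim_row A * dim_row B" "dim_col (kron A B) = dim_col A * dim_col B"
  unfolding kron_def by auto

lemma kron_carrier [simp]:
  "A \<in> carrier_mat a b \<Longrightarrow> B \<in> carrier_mat c d \<Longrightarrow> kron A B \<in> carrier_mat (a * c) (b * d)"
  unfolding kron_def by auto

lemma kron_index [simp]:
  "i < dim_row A * dim_row B \<Longrightarrow> j < dim_col A * dim_col B \<Longrightarrow>
    kron A B $$ (i, j) = A $$ (i div dim_row B, j div dim_col B) * B $$ (i mod dim_row B, j mod dim_col B)"
  unfolding kron_def by auto

lemma kron_mult_kron:
  assumes "dim_col A = dim_row B" "dim_col C = dim_row D"
  shows "kron A C * kron B D = kron (A * B) (C * D)"
proof (rule eq_matI)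
  fix i j assume "i < dim_row (kron (A * B) (C * D))" "j < dim_col (kron (A * B) (C * D))"
  then have i: "i < dim_row A * dim_row C" and j: "j < dim_col B * dim_col D" by auto
  note mod = mod_less_of_less_mult[OF i] mod_less_of_less_mult[OF j]
  note div = less_mult_imp_div_less[OF i] less_mult_imp_div_less[OF j]
  have "(kron A C * kron B D) $$ (i, j) =
      (\<Sum>l<dim_col A * dim_col C. kron A C $$ (i, l) * kron B D $$ (l, j))"
    by (rule index_mult_mat_sum) (use assms i j in auto)
  also have "\<dots> = (\<Sum>p<dim_col A. \<Sum>q<dim_col C.
      (A $$ (i div dim_row C, p) * B $$ (p, j div dim_col D)) *
      (C $$ (i mod dim_row C, q) * D $$ (q, j mod dim_col D)))"
    unfolding sum_lessThan_mult
  proof (intro sum.cong refl)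
    fix p q assume p: "p \<in> {..<dim_col A}" and q: "q \<in> {..<dim_col C}"
    have "q + p * dim_col C < dim_col A * dim_col C"
      using p q by (metis lessThan_iff add.commute mult.commute mult_Suc_right nat_add_left_cancel_less
          order_less_le_trans Suc_leI mult_le_mono2)
    then show "kron A C $$ (i, q + p * dim_col C) * kron B D $$ (q + p * dim_col C, j) =
        (A $$ (i div dim_row C, p) * B $$ (p, j div dim_col D)) *
        (C $$ (i mod dim_row C, q) * D $$ (q, j mod dim_col D))"
      using assms i j q by (simp add: algebra_simps)
  qed
  also have "\<dots> = (A * B) $$ (i div dim_row C, j div dim_col D) * (C * D) $$ (i mod dim_row C, j mod dim_col D)"
    using div mod assms by (simp add: sum_product scalar_prod_def atLeast0LessThan)
  finally show "(kron A C * kron B D) $$ (i, j) = kron (A * B) (C * D) $$ (i, j)"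
    using i j by simp
qed (use assms in auto)

lemma kron_one: "kron (1\<^sub>m m) (1\<^sub>m n) = 1\<^sub>m (m * n)"
proof (rule eq_matI)
  fix i j assume "i < dim_row (1\<^sub>m (m * n))" "j < dim_col (1\<^sub>m (m * n))"
  then have i: "i < m * n" and j: "j < m * n" by auto
  have "(i div n = j div n \<and> i mod n = j mod n) = (i = j)"
    by (metis div_mult_mod_eq)
  then show "kron (1\<^sub>m m) (1\<^sub>m n) $$ (i, j) = 1\<^sub>m (m * n) $$ (i, j)"
    using i j less_mult_imp_div_less[OF i] less_mult_imp_div_less[OF j]
      mod_less_of_less_mult[OF i] mod_less_of_less_mult[OF j] by auto
qed auto

lemma kron_add_left: "dim_row A = dim_row B \<Longrightarrow> dim_col A = dim_col B \<Longrightarrow> kron (A + B) C = kron A C + kron B C"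
  by (rule eq_matI) (auto simp: less_mult_imp_div_less algebra_simps)

lemma kron_add_right: "dim_row B = dim_row C \<Longrightarrow> dim_col B = dim_col C \<Longrightarrow> kron A (B + C) = kron A B + kron A C"
  by (rule eq_matI) (auto simp: mod_less_of_less_mult algebra_simps)

lemma kron_minus_left: "dim_row A = dim_row B \<Longrightarrow> dim_col A = dim_col B \<Longrightarrow> kron (A - B) C = kron A C - kron B C"
  by (rule eq_matI) (auto simp: less_mult_imp_div_less algebra_simps)

lemma kron_minus_right: "dim_row B = dim_row C \<Longrightarrow> dim_col B = dim_col C \<Longrightarrow> kron A (B - C) = kron A B - kron A C"
  by (rule eq_matI) (auto simp: mod_less_of_less_mult algebra_simps)

lemmas kron_distribs = kron_add_left kron_add_right kron_minus_left kron_minus_right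

lemma adj_kron: "adj (kron A B) = kron (adj A) (adj B)"
  by (rule eq_matI) (auto simp: less_mult_imp_div_less mod_less_of_less_mult)

lemma kron_one_mult_commute:
  assumes "Y \<in> carrier_mat a a" "X \<in> carrier_mat b b"
  shows "kron Y (1\<^sub>m b) * kron (1\<^sub>m a) X = kron Y X" "kron (1\<^sub>m a) X * kron Y (1\<^sub>m b) = kron Y X"
  using assms by (auto simp: kron_mult_kron)

lemma ctrace_mult_commute:
  assumes "A \<in> carrier_mat m n" "B \<in> carrier_mat n m"
  shows "ctrace (A * B) = ctrace (B * A)"
proof -
  have "ctrace (A * B) = (\<Sum>i<m. \<Sum>k<n. A $$ (i, k) * B $$ (k, i))"
    unfolding ctrace_def using assms
    by (intro sum.cong) (auto simp del: index_mult_mat(1) simp: index_mult_mat_sum[OF assms])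
  also have "\<dots> = (\<Sum>k<n. \<Sum>i<m. B $$ (k, i) * A $$ (i, k))"
    by (subst sum.swap) (simp add: mult.commute)
  also have "\<dots> = ctrace (B * A)"
    unfolding ctrace_def using assms
    by (intro sum.cong) (auto simp del: index_mult_mat(1) simp: index_mult_mat_sum[OF assms(2,1)])
  finally show ?thesis .
qed

lemma ctrace_add: "dim_row A = dim_row B \<Longrightarrow> dim_row B \<le> dim_col B \<Longrightarrow> ctrace (A + B) = ctrace A + ctrace B"
  unfolding ctrace_def by (simp add: sum.distrib)

lemma ctrace_minus: "dim_row A = dim_row B \<Longrightarrow> dim_row B \<le> dim_col B \<Longrightarrow> ctrace (A - B) = ctrace A - ctrace B"
  unfolding ctrace_def by (simp add: sum_subtractf)

lemma ctrace_smult: "dim_row A \<le> dim_col A \<Longrightarrow> ctrace (c \<cdot>\<^sub>m A) = c * ctrace A"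
  unfolding ctrace_def by (simp add: sum_distrib_left)

lemma ctrace_adj: "A \<in> carrier_mat n n \<Longrightarrow> ctrace (adj A) = cnj (ctrace A)"
  unfolding ctrace_def by (simp add: cnj_sum)

lemma msum_dims [simp]: "dim_row (msum r c F I) = r" "dim_col (msum r c F I) = c"
  unfolding msum_def by auto

lemma msum_carrier [simp]: "msum r c F I \<in> carrier_mat r c"
  unfolding msum_def by auto

lemma msum_index [simp]: "i < r \<Longrightarrow> j < c \<Longrightarrow> msum r c F I $$ (i, j) = (\<Sum>k\<in>I. F k $$ (i, j))"
  unfolding msum_def by auto

lemma ctrace_msum:
  assumes "\<And>k. k \<in> I \<Longrightarrow> F k \<in> carrier_mat n n"
  shows "ctrace (msum n n F I) = (\<Sum>k\<in>I. ctrace (F k))"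
proof -
  have "ctrace (msum n n F I) = (\<Sum>k\<in>I. \<Sum>i<n. F k $$ (i, i))"
    unfolding ctrace_def by (simp add: sum.swap[of _ I])
  then show ?thesis unfolding ctrace_def using assms by (metis (no_types, lifting) carrier_matD(1) sum.cong)
qed

lemma mult_msum:
  assumes "A \<in> carrier_mat m n" "\<And>k. k \<in> I \<Longrightarrow> F k \<in> carrier_mat n p"
  shows "A * msum n p F I = msum m p (\<lambda>k. A * F k) I"
proof (rule eq_matI)
  fix i j assume "i < dim_row (msum m p (\<lambda>k. A * F k) I)" "j < dim_col (msum m p (\<lambda>k. A * F k) I)"
  then have ij: "i < m" "j < p" by auto
  have "(A * msum n p F I) $$ (i, j) = (\<Sum>l<n. A $$ (i, l) * (\<Sum>k\<in>I. F k $$ (l, j)))"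
    using index_mult_mat_sum[OF assms(1) msum_carrier ij] ij by simp
  also have "\<dots> = (\<Sum>k\<in>I. \<Sum>l<n. A $$ (i, l) * F k $$ (l, j))"
    by (simp add: sum_distrib_left sum.swap[of _ I])
  also have "\<dots> = (\<Sum>k\<in>I. (A * F k) $$ (i, j))"
    using index_mult_mat_sum[OF assms(1) assms(2) ij] by simp
  finally show "(A * msum n p F I) $$ (i, j) = msum m p (\<lambda>k. A * F k) I $$ (i, j)" using ij by simp
qed (use assms in auto)

lemma msum_mult:
  assumes "A \<in> carrier_mat n p" "\<And>k. k \<in> I \<Longrightarrow> F k \<in> carrier_mat m n"
  shows "msum m n F I * A = msum m p (\<lambda>k. F k * A) I"
proof (rule eq_matI)
  fix i j assume "i < dim_row (msum m p (\<lambda>k. F k * A) I)" "j < dim_col (msum m p (\<lambda>k. F k * A) I)"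
  then have ij: "i < m" "j < p" by auto
  have "(msum m n F I * A) $$ (i, j) = (\<Sum>l<n. (\<Sum>k\<in>I. F k $$ (i, l)) * A $$ (l, j))"
    using index_mult_mat_sum[OF msum_carrier assms(1) ij] ij by simp
  also have "\<dots> = (\<Sum>k\<in>I. \<Sum>l<n. F k $$ (i, l) * A $$ (l, j))"
    by (simp add: sum_distrib_right sum.swap[of _ I])
  also have "\<dots> = (\<Sum>k\<in>I. (F k * A) $$ (i, j))"
    using index_mult_mat_sum[OF assms(2) assms(1) ij] by simp
  finally show "(msum m n F I * A) $$ (i, j) = msum m p (\<lambda>k. F k * A) I $$ (i, j)" using ij by simp
qed (use assms in auto)

lemma kron_msum_right:
  assumes "\<And>k. k \<in> I \<Longrightarrow> F k \<in> carrier_mat c d"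
  shows "kron Y (msum c d F I) = msum (dim_row Y * c) (dim_col Y * d) (\<lambda>k. kron Y (F k)) I"
proof (rule eq_matI)
  fix i j assume "i < dim_row (msum (dim_row Y * c) (dim_col Y * d) (\<lambda>k. kron Y (F k)) I)"
    "j < dim_col (msum (dim_row Y * c) (dim_col Y * d) (\<lambda>k. kron Y (F k)) I)"
  then have i: "i < dim_row Y * c" and j: "j < dim_col Y * d" by auto
  have "kron Y (F k) $$ (i, j) = Y $$ (i div c, j div d) * F k $$ (i mod c, j mod d)" if "k \<in> I" for k
    using assms[OF that] i j by simp
  then show "kron Y (msum c d F I) $$ (i, j) =
      msum (dim_row Y * c) (dim_col Y * d) (\<lambda>k. kron Y (F k)) I $$ (i, j)"
    using i j mod_less_of_less_mult[OF i] mod_less_of_less_mult[OF j] by (simp add: sum_distrib_left)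
qed auto

lemma msum_bit_times:
  "msum r c (\<lambda>(s, k). F s k) ({0::nat, 1} \<times> I) = msum r c (F 0) I + msum r c (F 1) I"
proof (rule eq_matI)
  fix i j assume "i < dim_row (msum r c (F 0) I + msum r c (F 1) I)"
    "j < dim_col (msum r c (F 0) I + msum r c (F 1) I)"
  moreover have "(\<Sum>z\<in>{0::nat, 1} \<times> I. (case z of (s, k) \<Rightarrow> F s k) $$ (i, j)) =
      (\<Sum>s\<in>{0::nat, 1}. \<Sum>k\<in>I. F s k $$ (i, j))"
    by (subst sum.cartesian_product) (simp add: case_prod_unfold)
  ultimately show "msum r c (\<lambda>(s, k). F s k) ({0::nat, 1} \<times> I) $$ (i, j) =
      (msum r c (F 0) I + msum r c (F 1) I) $$ (i, j)"
    by simp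
qed auto

section \<open>Positive semidefinite matrices\<close>

lemma psd_iff_psd_form: "psd n M \<longleftrightarrow> M \<in> carrier_mat n n \<and> psd_form n (\<lambda>i j. M $$ (i, j))"
  unfolding psd_def psd_form_def quad_form_def Let_def by simp

lemma psd_carrier: "psd n M \<Longrightarrow> M \<in> carrier_mat n n"
  unfolding psd_def by auto

lemma psd_hermitian:
  assumes "psd n M"
  shows "adj M = M"
proof (rule eq_matI)
  fix i j assume "i < dim_row M" "j < dim_col M"
  then show "adj M $$ (i, j) = M $$ (i, j)"
    using assms psd_form_hermitian[of n "\<lambda>i j. M $$ (i, j)" j i] unfolding psd_iff_psd_form by auto
qed (use psd_carrier[OF assms] in auto)

lemma psd_mult_adj:
  assumes X: "X \<in> carrier_mat n m"
  shows "psd n (X * adj X)"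
  unfolding psd_iff_psd_form psd_form_def
proof (intro conjI allI)
  fix v
  define u where "u k = (\<Sum>j<n. cnj (X $$ (j, k)) * v j)" for k
  have "quad_form n (\<lambda>i j. (X * adj X) $$ (i, j)) v =
      (\<Sum>i<n. \<Sum>j<n. \<Sum>k<m. (cnj (v i) * X $$ (i, k)) * (cnj (X $$ (j, k)) * v j))"
    unfolding quad_form_def
  proof (intro sum.cong refl)
    fix i j assume "i \<in> {..<n}" "j \<in> {..<n}"
    then have "(X * adj X) $$ (i, j) = (\<Sum>k<m. X $$ (i, k) * cnj (X $$ (j, k)))"
      using X by (auto simp del: index_mult_mat(1) simp: index_mult_mat_sum[OF X adj_carrier[OF X]]
          intro!: sum.cong)
    then show "cnj (v i) * (X * adj X) $$ (i, j) * v j =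
        (\<Sum>k<m. (cnj (v i) * X $$ (i, k)) * (cnj (X $$ (j, k)) * v j))"
      by (simp add: sum_distrib_left sum_distrib_right algebra_simps)
  qed
  also have "\<dots> = (\<Sum>k<m. (\<Sum>i<n. cnj (v i) * X $$ (i, k)) * (\<Sum>j<n. cnj (X $$ (j, k)) * v j))"
    by (simp add: sum_product, subst sum.swap, subst (2) sum.swap, simp)
  also have "\<dots> = (\<Sum>k<m. cnj (u k) * u k)"
    unfolding u_def cnj_sum by (simp add: mult.commute)
  finally have q: "quad_form n (\<lambda>i j. (X * adj X) $$ (i, j)) v = (\<Sum>k<m. cnj (u k) * u k)" .
  have "Im (cnj z * z) = 0" "Re (cnj z * z) \<ge> 0" for z :: complex
    by (auto simp: algebra_simps)
  then show "Im (quad_form n (\<lambda>i j. (X * adj X) $$ (i, j)) v) = 0"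
    "0 \<le> Re (quad_form n (\<lambda>i j. (X * adj X) $$ (i, j)) v)"
    unfolding q Im_sum Re_sum by (simp_all add: sum_nonneg)
qed (use X in auto)

lemma psd_gram_factorization:
  assumes "psd n M"
  obtains W where "W \<in> carrier_mat n n" "M = W * adj W"
proof -
  have M: "M \<in> carrier_mat n n" and P: "psd_form n (\<lambda>i j. M $$ (i, j))"
    using assms unfolding psd_iff_psd_form by auto
  obtain Wf where Wf: "gram_factor n (\<lambda>i j. M $$ (i, j)) Wf"
    using psd_form_gram_factor[OF P] by blast
  define W where "W = mat n n (\<lambda>(i, k). Wf i k)"
  have W: "W \<in> carrier_mat n n" unfolding W_def by auto
  have "M = W * adj W"
  proof (rule eq_matI)
    fix i j assume "i < dim_row (W * adj W)" "j < dim_col (W * adj W)"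
    then have ij: "i < n" "j < n" using W by auto
    have "(W * adj W) $$ (i, j) = (\<Sum>k<n. Wf i k * cnj (Wf j k))"
      using ij W unfolding index_mult_mat_sum[OF W adj_carrier[OF W] ij] by (intro sum.cong) (auto simp: W_def)
    then show "M $$ (i, j) = (W * adj W) $$ (i, j)" using Wf ij unfolding gram_factor_def by simp
  qed (use M W in auto)
  then show ?thesis using W that by blast
qed

lemma psd_congruence:
  assumes T: "psd m T" and Y: "Y \<in> carrier_mat n m"
  shows "psd n (Y * T * adj Y)"
proof -
  obtain W where W: "W \<in> carrier_mat m m" "T = W * adj W"
    using psd_gram_factorization[OF T] by blast
  have "Y * T * adj Y = (Y * W) * adj (Y * W)"
    unfolding W(2) adj_mult[OF Y W(1)] using Y W(1) by (simp add: assoc_mult_dim)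
  then show ?thesis using psd_mult_adj[of "Y * W" n m] Y W(1) by auto
qed

lemma psd_add: assumes "psd n A" "psd n B" shows "psd n (A + B)"
proof -
  have A: "A \<in> carrier_mat n n" and B: "B \<in> carrier_mat n n" using assms psd_carrier by auto
  have "quad_form n (\<lambda>i j. (A + B) $$ (i, j)) v =
      quad_form n (\<lambda>i j. A $$ (i, j)) v + quad_form n (\<lambda>i j. B $$ (i, j)) v" for v
    unfolding quad_form_def using A B by (simp add: sum.distrib[symmetric] algebra_simps)
  then show ?thesis using assms A B unfolding psd_iff_psd_form psd_form_def by auto
qed

lemma psd_msum:
  assumes "\<And>k. k \<in> I \<Longrightarrow> psd n (F k)"
  shows "psd n (msum n n F I)"
proof -
  have "quad_form n (\<lambda>i j. msum n n F I $$ (i, j)) v = (\<Sum>k\<in>I. quad_form n (\<lambda>i j. F k $$ (i, j)) v)" for v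
  proof -
    have "quad_form n (\<lambda>i j. msum n n F I $$ (i, j)) v =
        (\<Sum>i<n. \<Sum>j<n. \<Sum>k\<in>I. cnj (v i) * F k $$ (i, j) * v j)"
      unfolding quad_form_def by (intro sum.cong refl) (simp add: sum_distrib_left sum_distrib_right)
    also have "\<dots> = (\<Sum>k\<in>I. \<Sum>i<n. \<Sum>j<n. cnj (v i) * F k $$ (i, j) * v j)"
      by (subst sum.swap, subst (2) sum.swap) simp
    finally show ?thesis unfolding quad_form_def .
  qed
  then show ?thesis using assms unfolding psd_iff_psd_form psd_form_def
    by (auto simp: Im_sum Re_sum sum_nonneg)
qed

lemma psd_smult:
  assumes "psd n A" "c \<ge> 0"
  shows "psd n (of_real c \<cdot>\<^sub>m A)"
proof -
  have A: "A \<in> carrier_mat n n" using psd_carrier[OF assms(1)] .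
  have "quad_form n (\<lambda>i j. (of_real c \<cdot>\<^sub>m A) $$ (i, j)) v = of_real c * quad_form n (\<lambda>i j. A $$ (i, j)) v" for v
    unfolding quad_form_def using A by (simp add: sum_distrib_left algebra_simps)
  then show ?thesis using assms A unfolding psd_iff_psd_form psd_form_def by auto
qed

lemma psd_one: "psd n (1\<^sub>m n)"
  using psd_mult_adj[of "1\<^sub>m n" n n] by simp

lemma psd_kron:
  assumes "psd a A" "psd b B"
  shows "psd (a * b) (kron A B)"
proof -
  obtain V where V: "V \<in> carrier_mat a a" "A = V * adj V" using psd_gram_factorization[OF assms(1)] .
  obtain U where U: "U \<in> carrier_mat b b" "B = U * adj U" using psd_gram_factorization[OF assms(2)] .
  have "kron A B = kron V U * adj (kron V U)"
    unfolding V(2) U(2) adj_kron using V(1) U(1) by (simp add: kron_mult_kron)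
  then show ?thesis using psd_mult_adj[of "kron V U" "a * b" "a * b"] V U by auto
qed

text \<open>\<open>T - T\<^sup>2 = T (1 - T) T + (1 - T) T (1 - T)\<close>.\<close>

lemma psd_minus_square:
  assumes T: "psd n T" and S: "psd n (1\<^sub>m n - T)"
  shows "psd n (T - T * T)"
proof -
  have Tc: "T \<in> carrier_mat n n" using psd_carrier[OF T] .
  define S where "S = 1\<^sub>m n - T"
  have Sc: "S \<in> carrier_mat n n" unfolding S_def using Tc by auto
  have TS: "T * S = T - T * T" "S * T = T - T * T"
    unfolding S_def using Tc by (simp_all add: mult_minus_distrib_dim minus_mult_distrib_dim)
  have "T * S * T = T * T - T * T * T"
    unfolding TS using Tc by (simp add: minus_mult_distrib_dim)
  moreover have "S * T * S = (T - T * T) - (T * T - T * T * T)"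
    unfolding TS S_def using Tc by (simp add: mult_minus_distrib_dim minus_mult_distrib_dim)
  ultimately have "T - T * T = T * S * T + S * T * S"
    using Tc by (intro eq_matI) auto
  moreover have "psd n (T * S * adj T)" using psd_congruence[OF S[folded S_def] Tc] .
  moreover have "psd n (S * T * adj S)" using psd_congruence[OF T Sc] .
  ultimately show ?thesis using psd_hermitian[OF T] psd_hermitian[OF S[folded S_def]] psd_add by metis
qed

lemma psd_trace_nonneg:
  assumes M: "psd n M" and R: "psd n \<rho>"
  shows "Re (ctrace (M * \<rho>)) \<ge> 0"
proof -
  obtain W where W: "W \<in> carrier_mat n n" "\<rho> = W * adj W" using psd_gram_factorization[OF R] .
  have Mc: "M \<in> carrier_mat n n" using psd_carrier[OF M] .
  have "ctrace (M * \<rho>) = ctrace ((M * W) * adj W)"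
    unfolding W(2) using Mc W(1) by (simp add: assoc_mult_dim)
  also have "\<dots> = ctrace (adj W * M * adj (adj W))"
    using Mc W(1) by (subst ctrace_mult_commute[of _ n n]) (auto simp: assoc_mult_dim)
  finally have tr: "ctrace (M * \<rho>) = ctrace (adj W * M * adj (adj W))" .
  define N where "N = adj W * M * adj (adj W)"
  have P: "psd n N" unfolding N_def using psd_congruence[OF M adj_carrier[OF W(1)]] .
  have "\<forall>i<n. Re (N $$ (i, i)) \<ge> 0"
    using P psd_form_diag(2) unfolding psd_iff_psd_form by blast
  then have "Re (ctrace N) \<ge> 0"
    unfolding ctrace_def using psd_carrier[OF P] by (auto simp: Re_sum intro!: sum_nonneg)
  then show ?thesis unfolding tr N_def .
qed

section \<open>Expectations, the state seminorm and observables\<close>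

definition expect :: "complex mat \<Rightarrow> complex mat \<Rightarrow> real" where
  "expect \<rho> M = Re (ctrace (M * \<rho>))"

definition state_inner :: "complex mat \<Rightarrow> complex mat \<Rightarrow> complex mat \<Rightarrow> real" where
  "state_inner \<rho> X Y = expect \<rho> (adj X * Y)"

definition state_norm2 :: "complex mat \<Rightarrow> complex mat \<Rightarrow> real" where
  "state_norm2 \<rho> X = state_inner \<rho> X X"

text \<open>Differences \<open>E\<^sub>0 - E\<^sub>1\<close> of two-outcome measurements are observables in this sense.\<close>

definition observable :: "nat \<Rightarrow> complex mat \<Rightarrow> bool" where
  "observable n X \<longleftrightarrow> X \<in> carrier_mat n n \<and> adj X = X \<and> psd n (1\<^sub>m n - X * X)"

context
  fixes n :: nat and \<rho> :: "complex mat"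
  assumes state: "psd n \<rho>"
begin

lemma state_carrier: "\<rho> \<in> carrier_mat n n"
  using psd_carrier[OF state] .

lemma expect_add: "A \<in> carrier_mat n n \<Longrightarrow> B \<in> carrier_mat n n \<Longrightarrow> expect \<rho> (A + B) = expect \<rho> A + expect \<rho> B"
  unfolding expect_def using state_carrier by (simp add: add_mult_distrib_dim ctrace_add)

lemma expect_minus: "A \<in> carrier_mat n n \<Longrightarrow> B \<in> carrier_mat n n \<Longrightarrow> expect \<rho> (A - B) = expect \<rho> A - expect \<rho> B"
  unfolding expect_def using state_carrier by (simp add: minus_mult_distrib_dim ctrace_minus)

lemma expect_smult: "A \<in> carrier_mat n n \<Longrightarrow> expect \<rho> (of_real c \<cdot>\<^sub>m A) = c * expect \<rho> A"
  unfolding expect_def using state_carrier by (simp add: smult_mult_dim ctrace_smult)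

lemma expect_nonneg: "psd n M \<Longrightarrow> expect \<rho> M \<ge> 0"
  unfolding expect_def using psd_trace_nonneg state by blast

lemma expect_adj:
  assumes "M \<in> carrier_mat n n"
  shows "expect \<rho> (adj M) = expect \<rho> M"
proof -
  have "ctrace (adj M * \<rho>) = ctrace (adj (\<rho> * M))"
    using adj_mult[OF state_carrier assms] psd_hermitian[OF state] by simp
  also have "\<dots> = cnj (ctrace (M * \<rho>))"
    using ctrace_adj[of "\<rho> * M" n] ctrace_mult_commute[OF state_carrier assms] state_carrier assms by simp
  finally show ?thesis unfolding expect_def by simp
qed

lemma adj_mult_carrier: "X \<in> carrier_mat n n \<Longrightarrow> Y \<in> carrier_mat n n \<Longrightarrow> adj X * Y \<in> carrier_mat n n"
  by (rule mult_carrier_mat[of _ n n]) auto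

lemma state_inner_commute:
  assumes "X \<in> carrier_mat n n" "Y \<in> carrier_mat n n"
  shows "state_inner \<rho> X Y = state_inner \<rho> Y X"
  unfolding state_inner_def using expect_adj[OF adj_mult_carrier[OF assms]] adj_mult[of "adj X" n n Y n] assms
  by simp

lemma state_norm2_nonneg: "X \<in> carrier_mat n n \<Longrightarrow> state_norm2 \<rho> X \<ge> 0"
  unfolding state_norm2_def state_inner_def using expect_nonneg psd_mult_adj[of "adj X" n n] by simp

lemma state_inner_add_left:
  "X \<in> carrier_mat n n \<Longrightarrow> Y \<in> carrier_mat n n \<Longrightarrow> Z \<in> carrier_mat n n \<Longrightarrow>
    state_inner \<rho> (X + Y) Z = state_inner \<rho> X Z + state_inner \<rho> Y Z"
  unfolding state_inner_def by (simp add: adj_add add_mult_distrib_dim expect_add adj_mult_carrier)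

lemma state_inner_add_right:
  "X \<in> carrier_mat n n \<Longrightarrow> Y \<in> carrier_mat n n \<Longrightarrow> Z \<in> carrier_mat n n \<Longrightarrow>
    state_inner \<rho> X (Y + Z) = state_inner \<rho> X Y + state_inner \<rho> X Z"
  unfolding state_inner_def by (simp add: mult_add_distrib_dim expect_add adj_mult_carrier)

lemma state_inner_minus_left:
  "X \<in> carrier_mat n n \<Longrightarrow> Y \<in> carrier_mat n n \<Longrightarrow> Z \<in> carrier_mat n n \<Longrightarrow>
    state_inner \<rho> (X - Y) Z = state_inner \<rho> X Z - state_inner \<rho> Y Z"
  unfolding state_inner_def by (simp add: adj_minus minus_mult_distrib_dim expect_minus adj_mult_carrier)

lemma state_inner_minus_right:
  "X \<in> carrier_mat n n \<Longrightarrow> Y \<in> carrier_mat n n \<Longrightarrow> Z \<in> carrier_mat n n \<Longrightarrow>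
    state_inner \<rho> X (Y - Z) = state_inner \<rho> X Y - state_inner \<rho> X Z"
  unfolding state_inner_def by (simp add: mult_minus_distrib_dim expect_minus adj_mult_carrier)

lemma state_inner_smult_left:
  "X \<in> carrier_mat n n \<Longrightarrow> Y \<in> carrier_mat n n \<Longrightarrow>
    state_inner \<rho> (of_real c \<cdot>\<^sub>m X) Y = c * state_inner \<rho> X Y"
  unfolding state_inner_def adj_smult by (simp add: smult_mult_dim expect_smult adj_mult_carrier)

lemma state_inner_smult_right:
  "X \<in> carrier_mat n n \<Longrightarrow> Y \<in> carrier_mat n n \<Longrightarrow>
    state_inner \<rho> X (of_real c \<cdot>\<^sub>m Y) = c * state_inner \<rho> X Y"
  unfolding state_inner_def by (simp add: mult_smult_dim expect_smult adj_mult_carrier)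

lemma state_norm2_smult: "X \<in> carrier_mat n n \<Longrightarrow> state_norm2 \<rho> (of_real c \<cdot>\<^sub>m X) = c * c * state_norm2 \<rho> X"
  unfolding state_norm2_def by (simp add: state_inner_smult_left state_inner_smult_right)

context
  fixes X Y :: "complex mat"
  assumes X: "X \<in> carrier_mat n n" and Y: "Y \<in> carrier_mat n n"
begin

lemma state_norm2_add: "state_norm2 \<rho> (X + Y) = state_norm2 \<rho> X + state_norm2 \<rho> Y + 2 * state_inner \<rho> X Y"
  unfolding state_norm2_def using X Y state_inner_commute[OF Y X]
  by (simp add: state_inner_add_left state_inner_add_right)

lemma state_norm2_minus: "state_norm2 \<rho> (X - Y) = state_norm2 \<rho> X + state_norm2 \<rho> Y - 2 * state_inner \<rho> X Y"
  unfolding state_norm2_def using X Y state_inner_commute[OF Y X]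
  by (simp add: state_inner_minus_left state_inner_minus_right minus_carrier_mat)

lemma state_norm2_add_le: "state_norm2 \<rho> (X + Y) \<le> 2 * state_norm2 \<rho> X + 2 * state_norm2 \<rho> Y"
  using state_norm2_add state_norm2_minus state_norm2_nonneg[of "X - Y"] X Y by (simp add: minus_carrier_mat)

lemma state_norm2_minus_le: "state_norm2 \<rho> (X - Y) \<le> 2 * state_norm2 \<rho> X + 2 * state_norm2 \<rho> Y"
  using state_norm2_add state_norm2_minus state_norm2_nonneg[of "X + Y"] X Y by (simp add: minus_carrier_mat)

lemma state_inner_le: "2 * state_inner \<rho> X Y \<le> state_norm2 \<rho> X + state_norm2 \<rho> Y"
  using state_norm2_minus state_norm2_nonneg[of "X - Y"] X Y by (simp add: minus_carrier_mat)

end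

lemma state_norm2_hermitian: "adj A = A \<Longrightarrow> state_norm2 \<rho> A = expect \<rho> (A * A)"
  unfolding state_norm2_def state_inner_def by simp

lemma state_norm2_mult_observable_le:
  assumes X: "X \<in> carrier_mat n n" and H: "observable n H"
  shows "state_norm2 \<rho> (H * X) \<le> state_norm2 \<rho> X"
proof -
  have Hc: "H \<in> carrier_mat n n" "adj H = H" and c: "psd n (1\<^sub>m n - H * H)"
    using H unfolding observable_def by auto
  have "adj (H * X) * (H * X) = adj X * (H * H) * X"
    using adj_mult[OF Hc(1) X] Hc X by (simp add: assoc_mult_dim)
  moreover have "adj X * X - adj X * (H * H) * X = adj X * (1\<^sub>m n - H * H) * adj (adj X)"
    using Hc X by (simp add: mult_minus_distrib_dim minus_mult_distrib_dim)
  moreover have "expect \<rho> (adj X * (1\<^sub>m n - H * H) * adj (adj X)) \<ge> 0"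
    using expect_nonneg psd_congruence[OF c, of "adj X" n] X by simp
  moreover have "adj X * X \<in> carrier_mat n n" "adj X * (H * H) * X \<in> carrier_mat n n"
    using Hc X by (auto intro!: mult_carrier_mat[of _ n n])
  ultimately show ?thesis
    unfolding state_norm2_def state_inner_def using expect_minus[of "adj X * X" "adj X * (H * H) * X"]
    by simp
qed

lemma state_norm2_observable_combination_le:
  assumes X: "X \<in> carrier_mat n n" and Y: "Y \<in> carrier_mat n n"
    and G: "observable n G" and H: "observable n H"
  shows "state_norm2 \<rho> (G * X + H * Y) \<le> 2 * state_norm2 \<rho> X + 2 * state_norm2 \<rho> Y"
    "state_norm2 \<rho> (G * X - H * Y) \<le> 2 * state_norm2 \<rho> X + 2 * state_norm2 \<rho> Y"
proof -
  have "G * X \<in> carrier_mat n n" "H * Y \<in> carrier_mat n n"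
    using G H X Y unfolding observable_def by (auto intro!: mult_carrier_mat[of _ n n])
  then show "state_norm2 \<rho> (G * X + H * Y) \<le> 2 * state_norm2 \<rho> X + 2 * state_norm2 \<rho> Y"
    "state_norm2 \<rho> (G * X - H * Y) \<le> 2 * state_norm2 \<rho> X + 2 * state_norm2 \<rho> Y"
    using state_norm2_add_le state_norm2_minus_le state_norm2_mult_observable_le[OF X G]
      state_norm2_mult_observable_le[OF Y H] by (smt (verit))+
qed

end

context
  fixes n :: nat and \<rho> :: "complex mat"
  assumes state: "density n \<rho>"
begin

lemma density_psd: "psd n \<rho>"
  using state unfolding density_def by simp

lemma expect_one: "expect \<rho> (1\<^sub>m n) = 1"
  using state psd_carrier[OF density_psd] unfolding density_def expect_def by simp

lemma state_norm2_observable_le_1: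
  assumes "observable n A"
  shows "state_norm2 \<rho> A \<le> 1"
proof -
  have A: "A \<in> carrier_mat n n" "adj A = A" "psd n (1\<^sub>m n - A * A)"
    using assms unfolding observable_def by auto
  have "0 \<le> expect \<rho> (1\<^sub>m n - A * A)" using expect_nonneg[OF density_psd A(3)] .
  also have "\<dots> = 1 - state_norm2 \<rho> A"
    using expect_minus[OF density_psd, of "1\<^sub>m n" "A * A"] expect_one
      state_norm2_hermitian[OF density_psd A(2)] A(1) by simp
  finally show ?thesis by simp
qed

lemma state_inner_observables_le_1:
  assumes "observable n X" "observable n Y"
  shows "state_inner \<rho> X Y \<le> 1"
  using state_inner_le[OF density_psd, of X Y] state_norm2_observable_le_1[OF assms(1)]
    state_norm2_observable_le_1[OF assms(2)] assms unfolding observable_def by linarith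

text \<open>\<open>U = 1 - B\<^sup>2\<close> satisfies \<open>0 \<le> U \<le> 1\<close>, hence \<open>U\<^sup>2 \<le> U\<close>.\<close>

lemma state_norm2_one_minus_square_le:
  assumes B: "observable n B"
  shows "state_norm2 \<rho> (1\<^sub>m n - B * B) \<le> 1 - state_norm2 \<rho> B"
proof -
  have Bc: "B \<in> carrier_mat n n" "adj B = B" and c: "psd n (1\<^sub>m n - B * B)"
    using B unfolding observable_def by auto
  define U where "U = 1\<^sub>m n - B * B"
  have U: "U \<in> carrier_mat n n" "adj U = U" unfolding U_def using Bc psd_hermitian[OF c] by auto
  have "psd n (B * B)" using psd_mult_adj[of "adj B" n n] Bc by simp
  moreover have "1\<^sub>m n - U = B * B" unfolding U_def using Bc by (intro eq_matI) auto
  ultimately have "psd n (U - U * U)" using psd_minus_square[of n U] c unfolding U_def by metis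
  then have "expect \<rho> (U * U) \<le> expect \<rho> U"
    using expect_nonneg[OF density_psd] expect_minus[OF density_psd, of U "U * U"] U by fastforce
  moreover have "expect \<rho> U = 1 - state_norm2 \<rho> B"
    unfolding U_def using expect_minus[OF density_psd] expect_one state_norm2_hermitian[OF density_psd] Bc
    by simp
  ultimately show ?thesis using state_norm2_hermitian[OF density_psd U(2)] unfolding U_def by simp
qed

end

lemma observable_difference_of_effects:
  assumes "povm2 n E"
  shows "observable n (E 0 - E 1)"
proof -
  have E: "psd n (E 0)" "psd n (E 1)" "E 0 + E 1 = 1\<^sub>m n" using assms unfolding povm2_def by auto
  have c0: "E 0 \<in> carrier_mat n n" and c1: "E 1 \<in> carrier_mat n n" using E psd_carrier by auto
  have E1: "E 1 = 1\<^sub>m n - E 0"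
  proof (rule eq_matI)
    fix i j assume ij: "i < dim_row (1\<^sub>m n - E 0)" "j < dim_col (1\<^sub>m n - E 0)"
    have "(E 0 + E 1) $$ (i, j) = 1\<^sub>m n $$ (i, j)" using E(3) by simp
    then show "E 1 $$ (i, j) = (1\<^sub>m n - E 0) $$ (i, j)" using ij c0 c1 by (simp add: eq_diff_eq add.commute)
  qed (use c0 c1 in auto)
  have "1\<^sub>m n - (E 0 - E 1) * (E 0 - E 1) = of_real 4 \<cdot>\<^sub>m (E 0 - E 0 * E 0)"
    unfolding E1 using c0 by (intro eq_matI) (auto simp: mat_ring_distribs_dim algebra_simps)
  moreover have "psd n (E 0 - E 0 * E 0)" using psd_minus_square[OF E(1)] E(2) unfolding E1 .
  ultimately show ?thesis
    unfolding observable_def using psd_smult[of n "E 0 - E 0 * E 0" 4] adj_minus psd_hermitian E c0 c1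
    by (simp add: minus_carrier_mat)
qed

lemma observable_kron_one_right:
  assumes "observable a X"
  shows "observable (a * b) (kron X (1\<^sub>m b))"
proof -
  have X: "X \<in> carrier_mat a a" "adj X = X" "psd a (1\<^sub>m a - X * X)" using assms unfolding observable_def by auto
  have "1\<^sub>m (a * b) - kron X (1\<^sub>m b) * kron X (1\<^sub>m b) = kron (1\<^sub>m a - X * X) (1\<^sub>m b)"
    using X by (simp add: kron_mult_kron kron_one[symmetric] kron_minus_left)
  then show ?thesis
    unfolding observable_def adj_kron using psd_kron[OF X(3) psd_one[of b]] X by simp
qed

lemma observable_kron_one_left:
  assumes "observable b X"
  shows "observable (a * b) (kron (1\<^sub>m a) X)"
proof -
  have X: "X \<in> carrier_mat b b" "adj X = X" "psd b (1\<^sub>m b - X * X)" using assms unfolding observable_def by auto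
  have "1\<^sub>m (a * b) - kron (1\<^sub>m a) X * kron (1\<^sub>m a) X = kron (1\<^sub>m a) (1\<^sub>m b - X * X)"
    using X by (simp add: kron_mult_kron kron_one[symmetric] kron_minus_right)
  then show ?thesis
    unfolding observable_def adj_kron using psd_kron[OF psd_one[of a] X(3)] X by simp
qed

section \<open>Robust Tsirelson bound and monogamy\<close>

definition chsh_correlation :: "complex mat \<Rightarrow> complex mat \<Rightarrow> complex mat \<Rightarrow> complex mat \<Rightarrow> complex mat \<Rightarrow> real" where
  "chsh_correlation \<rho> A0 A1 B0 B1 =
     state_inner \<rho> A0 B0 + state_inner \<rho> A0 B1 + state_inner \<rho> A1 B0 - state_inner \<rho> A1 B1"

lemma chsh_error_norms:
  assumes state: "psd n \<rho>"
    and c: "A0 \<in> carrier_mat n n" "A1 \<in> carrier_mat n n" "B0 \<in> carrier_mat n n" "B1 \<in> carrier_mat n n"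
  shows "state_norm2 \<rho> (A0 - of_real s \<cdot>\<^sub>m (B0 + B1)) + state_norm2 \<rho> (A1 - of_real s \<cdot>\<^sub>m (B0 - B1)) =
    state_norm2 \<rho> A0 + state_norm2 \<rho> A1 + 2 * s * s * (state_norm2 \<rho> B0 + state_norm2 \<rho> B1)
    - 2 * s * chsh_correlation \<rho> A0 A1 B0 B1"
  unfolding chsh_correlation_def using state c
  by (simp add: state_norm2_minus state_norm2_smult state_norm2_add state_inner_smult_right
      state_inner_add_right state_inner_minus_right minus_carrier_mat algebra_simps)

lemma tsirelson_bound:
  assumes state: "density n \<rho>"
    and obs: "observable n A0" "observable n A1" "observable n B0" "observable n B1"
  shows "chsh_correlation \<rho> A0 A1 B0 B1 \<le> 2 * sqrt 2"
proof -
  have c: "A0 \<in> carrier_mat n n" "A1 \<in> carrier_mat n n" "B0 \<in> carrier_mat n n" "B1 \<in> carrier_mat n n"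
    using obs unfolding observable_def by auto
  note psd = density_psd[OF state]
  define s :: real where "s = 1 / sqrt 2"
  have "0 \<le> state_norm2 \<rho> (A0 - of_real s \<cdot>\<^sub>m (B0 + B1)) + state_norm2 \<rho> (A1 - of_real s \<cdot>\<^sub>m (B0 - B1))"
    using state_norm2_nonneg[OF psd] c by (simp add: minus_carrier_mat add_nonneg_nonneg)
  also have "\<dots> = state_norm2 \<rho> A0 + state_norm2 \<rho> A1 + state_norm2 \<rho> B0 + state_norm2 \<rho> B1
      - sqrt 2 * chsh_correlation \<rho> A0 A1 B0 B1"
    unfolding chsh_error_norms[OF psd c] s_def by (simp add: field_simps)
  finally have "sqrt 2 * chsh_correlation \<rho> A0 A1 B0 B1 \<le> 4"
    using state_norm2_observable_le_1[OF state] obs by (smt (verit))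
  also have "4 = sqrt 2 * (2 * sqrt 2)" by simp
  finally show ?thesis by simp
qed

text \<open>The identity behind the rigidity of CHSH: the anticommutator of Alice's observables is a
  combination of the error terms of \<open>chsh_error_norms\<close> and of \<open>1 - B\<^sub>0\<^sup>2\<close>, \<open>1 - B\<^sub>1\<^sup>2\<close>.\<close>

lemma chsh_anticommutator_identity:
  fixes A0 A1 B0 B1 :: "complex mat" and t :: complex
  assumes c: "A0 \<in> carrier_mat n n" "A1 \<in> carrier_mat n n" "B0 \<in> carrier_mat n n" "B1 \<in> carrier_mat n n"
    and comm: "B0 * A0 = A0 * B0" "B1 * A0 = A0 * B1" "B0 * A1 = A1 * B0" "B1 * A1 = A1 * B1"
    and t: "2 * t * t = 1"
  defines "X0 \<equiv> A0 - t \<cdot>\<^sub>m (B0 + B1)" and "X1 \<equiv> A1 - t \<cdot>\<^sub>m (B0 - B1)"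
  shows "A0 * A1 + A1 * A0 = (A0 * X1 + A1 * X0) + (t \<cdot>\<^sub>m (B0 * X0 - B1 * X0) + t \<cdot>\<^sub>m (B0 * X1 + B1 * X1))
    + ((1\<^sub>m n - B1 * B1) - (1\<^sub>m n - B0 * B0))"
proof -
  have "(1\<^sub>m n - B1 * B1) - (1\<^sub>m n - B0 * B0) = (2 * t * t) \<cdot>\<^sub>m (B0 * B0 - B1 * B1)"
    unfolding t using c by (intro eq_matI) auto
  then show ?thesis
    unfolding X0_def X1_def using c
    by (simp add: mat_ring_distribs_dim comm) (rule eq_matI; auto simp: algebra_simps)
qed

lemma anticommutator_le_chsh_errors:
  assumes state: "density n \<rho>"
    and obs: "observable n A0" "observable n A1" "observable n B0" "observable n B1"
    and comm: "B0 * A0 = A0 * B0" "B1 * A0 = A0 * B1" "B0 * A1 = A1 * B0" "B1 * A1 = A1 * B1"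
  defines "X0 \<equiv> A0 - of_real (1 / sqrt 2) \<cdot>\<^sub>m (B0 + B1)"
    and "X1 \<equiv> A1 - of_real (1 / sqrt 2) \<cdot>\<^sub>m (B0 - B1)"
  shows "state_norm2 \<rho> (A0 * A1 + A1 * A0) \<le>
    24 * (state_norm2 \<rho> X0 + state_norm2 \<rho> X1) + 4 * ((1 - state_norm2 \<rho> B0) + (1 - state_norm2 \<rho> B1))"
proof -
  note psd = density_psd[OF state]
  note comb = state_norm2_observable_combination_le[OF psd]
  have c: "A0 \<in> carrier_mat n n" "A1 \<in> carrier_mat n n" "B0 \<in> carrier_mat n n" "B1 \<in> carrier_mat n n"
    using obs unfolding observable_def by auto
  define s :: real where "s = 1 / sqrt 2"
  have X: "X0 \<in> carrier_mat n n" "X1 \<in> carrier_mat n n" unfolding X0_def X1_def using c by auto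
  have "2 * of_real s * of_real s = (1 :: complex)"
    unfolding s_def by (simp add: field_simps flip: of_real_mult)
  moreover have "X0 = A0 - of_real s \<cdot>\<^sub>m (B0 + B1)" "X1 = A1 - of_real s \<cdot>\<^sub>m (B0 - B1)"
    unfolding X0_def X1_def s_def by simp_all
  ultimately have Z: "A0 * A1 + A1 * A0 = (A0 * X1 + A1 * X0)
      + (of_real s \<cdot>\<^sub>m (B0 * X0 - B1 * X0) + of_real s \<cdot>\<^sub>m (B0 * X1 + B1 * X1))
      + ((1\<^sub>m n - B1 * B1) - (1\<^sub>m n - B0 * B0))"
    using chsh_anticommutator_identity[OF c comm] by simp
  define T where "T = A0 * X1 + A1 * X0"
  define S0 where "S0 = B0 * X0 - B1 * X0"
  define S1 where "S1 = B0 * X1 + B1 * X1"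
  define U where "U = (1\<^sub>m n - B1 * B1) - (1\<^sub>m n - B0 * B0)"
  have cS: "T \<in> carrier_mat n n" "S0 \<in> carrier_mat n n" "S1 \<in> carrier_mat n n" "U \<in> carrier_mat n n"
    unfolding T_def S0_def S1_def U_def using c X by (auto intro!: mult_carrier_mat[of _ n n])
  have "state_norm2 \<rho> (of_real s \<cdot>\<^sub>m S0) = state_norm2 \<rho> S0 / 2"
    "state_norm2 \<rho> (of_real s \<cdot>\<^sub>m S1) = state_norm2 \<rho> S1 / 2"
    using state_norm2_smult[OF psd cS(2), of s] state_norm2_smult[OF psd cS(3), of s]
    unfolding s_def by simp_all
  then have "state_norm2 \<rho> (of_real s \<cdot>\<^sub>m S0 + of_real s \<cdot>\<^sub>m S1) \<le> 4 * state_norm2 \<rho> X0 + 4 * state_norm2 \<rho> X1"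
    using state_norm2_add_le[OF psd, of "of_real s \<cdot>\<^sub>m S0" "of_real s \<cdot>\<^sub>m S1"] cS
      comb(2)[OF X(1) X(1) obs(3,4)] comb(1)[OF X(2) X(2) obs(3,4)]
    unfolding S0_def S1_def by simp
  moreover have "state_norm2 \<rho> T \<le> 2 * state_norm2 \<rho> X1 + 2 * state_norm2 \<rho> X0"
    unfolding T_def by (rule comb(1)[OF X(2) X(1) obs(1,2)])
  moreover have "state_norm2 \<rho> U \<le> 2 * (1 - state_norm2 \<rho> B1) + 2 * (1 - state_norm2 \<rho> B0)"
    using state_norm2_minus_le[OF psd, of "1\<^sub>m n - B1 * B1" "1\<^sub>m n - B0 * B0"] c
      state_norm2_one_minus_square_le[OF state obs(3)] state_norm2_one_minus_square_le[OF state obs(4)]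
    unfolding U_def by (simp add: minus_carrier_mat)
  moreover have "state_norm2 \<rho> (T + (of_real s \<cdot>\<^sub>m S0 + of_real s \<cdot>\<^sub>m S1) + U) \<le>
      4 * state_norm2 \<rho> T + 4 * state_norm2 \<rho> (of_real s \<cdot>\<^sub>m S0 + of_real s \<cdot>\<^sub>m S1) + 2 * state_norm2 \<rho> U"
    using state_norm2_add_le[OF psd, of "T + (of_real s \<cdot>\<^sub>m S0 + of_real s \<cdot>\<^sub>m S1)" U]
      state_norm2_add_le[OF psd, of T "of_real s \<cdot>\<^sub>m S0 + of_real s \<cdot>\<^sub>m S1"] cS by simp
  ultimately show ?thesis unfolding Z T_def[symmetric] S0_def[symmetric] S1_def[symmetric] U_def[symmetric]
    by (smt (z3))
qed

lemma anticommutator_le_chsh_deficit: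
  assumes state: "density n \<rho>"
    and obs: "observable n A0" "observable n A1" "observable n B0" "observable n B1"
    and comm: "B0 * A0 = A0 * B0" "B1 * A0 = A0 * B1" "B0 * A1 = A1 * B0" "B1 * A1 = A1 * B1"
  shows "state_norm2 \<rho> (A0 * A1 + A1 * A0) \<le> 34 * (2 * sqrt 2 - chsh_correlation \<rho> A0 A1 B0 B1)"
proof -
  have c: "A0 \<in> carrier_mat n n" "A1 \<in> carrier_mat n n" "B0 \<in> carrier_mat n n" "B1 \<in> carrier_mat n n"
    using obs unfolding observable_def by auto
  let ?e = "state_norm2 \<rho> (A0 - of_real (1 / sqrt 2) \<cdot>\<^sub>m (B0 + B1))
    + state_norm2 \<rho> (A1 - of_real (1 / sqrt 2) \<cdot>\<^sub>m (B0 - B1))"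
  define r where "r = sqrt 2 * chsh_correlation \<rho> A0 A1 B0 B1"
  have "?e = state_norm2 \<rho> A0 + state_norm2 \<rho> A1 + state_norm2 \<rho> B0 + state_norm2 \<rho> B1 - r"
    unfolding chsh_error_norms[OF density_psd[OF state] c] r_def by (simp add: field_simps)
  then have "24 * ?e + 4 * ((1 - state_norm2 \<rho> B0) + (1 - state_norm2 \<rho> B1)) \<le> 24 * (4 - r)"
    using state_norm2_observable_le_1[OF state obs(1)] state_norm2_observable_le_1[OF state obs(2)]
      state_norm2_observable_le_1[OF state obs(3)] state_norm2_observable_le_1[OF state obs(4)]
    by (smt (z3))
  also have "\<dots> = (24 * sqrt 2) * (2 * sqrt 2 - chsh_correlation \<rho> A0 A1 B0 B1)"
    unfolding r_def by (simp add: algebra_simps)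
  also have "\<dots> \<le> 34 * (2 * sqrt 2 - chsh_correlation \<rho> A0 A1 B0 B1)"
  proof (rule mult_right_mono)
    have "sqrt 2 \<le> (17 / 12 :: real)" by (rule real_le_lsqrt) (auto simp: power2_eq_square)
    then show "24 * sqrt 2 \<le> (34 :: real)" by simp
    show "0 \<le> 2 * sqrt 2 - chsh_correlation \<rho> A0 A1 B0 B1" using tsirelson_bound[OF state obs] by simp
  qed
  finally show ?thesis using anticommutator_le_chsh_errors[OF state obs comm] by linarith
qed

lemma state_norm2_commuting_product_ge:
  assumes state: "density n \<sigma>" and obs: "observable n P" "observable n Q"
    and comm: "Q * P = P * Q" and prod: "psd n ((1\<^sub>m n - P * P) * (1\<^sub>m n - Q * Q))"
  shows "state_norm2 \<sigma> P + state_norm2 \<sigma> Q - 1 \<le> state_norm2 \<sigma> (P * Q)"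
proof -
  note psd = density_psd[OF state]
  have P: "P \<in> carrier_mat n n" "adj P = P" and Q: "Q \<in> carrier_mat n n" "adj Q = Q"
    using obs unfolding observable_def by auto
  have c: "P * P \<in> carrier_mat n n" "Q * Q \<in> carrier_mat n n" "P * P * (Q * Q) \<in> carrier_mat n n"
    using P Q by (auto intro!: mult_carrier_mat[of _ n n])
  have "adj (P * Q) * (P * Q) = (Q * P) * (P * Q)"
    using adj_mult[OF P(1) Q(1)] P Q by simp
  also have "\<dots> = (P * Q) * (P * Q)"
    by (simp only: comm)
  also have "\<dots> = P * ((Q * P) * Q)"
    using P Q by (simp add: assoc_mult_dim)
  also have "(Q * P) * Q = P * (Q * Q)"
    using P Q by (simp add: assoc_mult_dim comm)
  also have "P * (P * (Q * Q)) = P * P * (Q * Q)"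
    using P Q by (simp add: assoc_mult_dim)
  finally have PQ: "state_norm2 \<sigma> (P * Q) = expect \<sigma> (P * P * (Q * Q))"
    unfolding state_norm2_def state_inner_def by simp
  have "(1\<^sub>m n - P * P) * (1\<^sub>m n - Q * Q) = (1\<^sub>m n - P * P) - (Q * Q - P * P * (Q * Q))"
    using c P Q by (simp add: mult_minus_distrib_dim minus_mult_distrib_dim)
  then have "0 \<le> 1 - expect \<sigma> (P * P) - (expect \<sigma> (Q * Q) - expect \<sigma> (P * P * (Q * Q)))"
    using expect_nonneg[OF psd prod] expect_minus[OF psd] expect_one[OF state] c
    by (simp add: minus_carrier_mat)
  then show ?thesis
    unfolding PQ using state_norm2_hermitian[OF psd] P Q by simp
qed

lemma cloning_anticommutator_identity:
  fixes A0 A1 P0 Q1 :: "complex mat"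
  assumes c: "A0 \<in> carrier_mat n n" "A1 \<in> carrier_mat n n" "P0 \<in> carrier_mat n n" "Q1 \<in> carrier_mat n n"
   and comm: "Q1 * A0 = A0 * Q1" "P0 * A1 = A1 * P0" "Q1 * P0 = P0 * Q1"
  shows "2 \<cdot>\<^sub>m (P0 * Q1) = (A0 * A1 + A1 * A0)
    - ((Q1 * (A0 - P0) + A0 * (A1 - Q1)) + (P0 * (A1 - Q1) + A1 * (A0 - P0)))"
  using c by (simp add: mat_ring_distribs_dim comm) (rule eq_matI; auto simp: algebra_simps)

text \<open>If \<open>P\<^sub>0\<close> reproduces \<open>A\<^sub>0\<close> and \<open>Q\<^sub>1\<close> reproduces \<open>A\<^sub>1\<close>, the anticommutator of \<open>A\<^sub>0\<close> and \<open>A\<^sub>1\<close> is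
  close to \<open>2 P\<^sub>0 Q\<^sub>1\<close>, and the commuting contractions \<open>P\<^sub>0\<close>, \<open>Q\<^sub>1\<close> of norm close to \<open>1\<close> have
  a product of norm close to \<open>1\<close>.\<close>

lemma cloning_anticommutator_ge:
  assumes state: "density n \<sigma>"
    and obs: "observable n A0" "observable n A1" "observable n P0" "observable n Q1"
    and comm: "Q1 * A0 = A0 * Q1" "P0 * A1 = A1 * P0" "Q1 * P0 = P0 * Q1"
    and prod: "psd n ((1\<^sub>m n - P0 * P0) * (1\<^sub>m n - Q1 * Q1))"
  shows "2 - 20 * ((1 - state_inner \<sigma> A0 P0) + (1 - state_inner \<sigma> A1 Q1)) \<le> state_norm2 \<sigma> (A0 * A1 + A1 * A0)"
proof -
  note psd = density_psd[OF state]
  have c: "A0 \<in> carrier_mat n n" "A1 \<in> carrier_mat n n" "P0 \<in> carrier_mat n n" "Q1 \<in> carrier_mat n n"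
    using obs unfolding observable_def by auto
  define E where "E = A0 - P0"
  define F where "F = A1 - Q1"
  define R where "R = (Q1 * E + A0 * F) + (P0 * F + A1 * E)"
  have EF: "E \<in> carrier_mat n n" "F \<in> carrier_mat n n" unfolding E_def F_def using c by auto
  have prods: "Q1 * E + A0 * F \<in> carrier_mat n n" "P0 * F + A1 * E \<in> carrier_mat n n"
      "P0 * Q1 \<in> carrier_mat n n" "A0 * A1 + A1 * A0 \<in> carrier_mat n n"
    using c EF by (auto intro!: mult_carrier_mat[of _ n n])
  have R: "R \<in> carrier_mat n n" unfolding R_def using prods by auto
  have "4 * state_norm2 \<sigma> (P0 * Q1) = state_norm2 \<sigma> ((A0 * A1 + A1 * A0) - R)"
    using state_norm2_smult[OF psd prods(3), of 2] cloning_anticommutator_identity[OF c comm]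
    unfolding R_def E_def F_def by simp
  also have "\<dots> \<le> 2 * state_norm2 \<sigma> (A0 * A1 + A1 * A0) + 2 * state_norm2 \<sigma> R"
    by (rule state_norm2_minus_le[OF psd prods(4) R])
  finally have Z: "4 * state_norm2 \<sigma> (P0 * Q1) \<le> 2 * state_norm2 \<sigma> (A0 * A1 + A1 * A0) + 2 * state_norm2 \<sigma> R" .
  have R_le: "state_norm2 \<sigma> R \<le> 8 * state_norm2 \<sigma> E + 8 * state_norm2 \<sigma> F"
    using state_norm2_add_le[OF psd prods(1,2)] unfolding R_def
    using state_norm2_observable_combination_le(1)[OF psd EF obs(4,1)]
      state_norm2_observable_combination_le(1)[OF psd EF(2,1) obs(3,2)] by linarith
  have n1: "state_norm2 \<sigma> A0 \<le> 1" "state_norm2 \<sigma> A1 \<le> 1" "state_norm2 \<sigma> P0 \<le> 1" "state_norm2 \<sigma> Q1 \<le> 1"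
    using state_norm2_observable_le_1[OF state] obs by auto
  have "state_norm2 \<sigma> E \<le> 2 - 2 * state_inner \<sigma> A0 P0"
    using state_norm2_minus[OF psd c(1,3)] n1 unfolding E_def by linarith
  moreover have "state_norm2 \<sigma> F \<le> 2 - 2 * state_inner \<sigma> A1 Q1"
    using state_norm2_minus[OF psd c(2,4)] n1 unfolding F_def by linarith
  moreover have "2 * state_inner \<sigma> A0 P0 + 2 * state_inner \<sigma> A1 Q1 - 3 \<le> state_norm2 \<sigma> (P0 * Q1)"
    using state_norm2_commuting_product_ge[OF state obs(3,4) comm(3) prod]
      state_inner_le[OF psd c(1,3)] state_inner_le[OF psd c(2,4)] n1 by linarith
  ultimately show ?thesis using Z R_le by (smt (verit))
qed

section \<open>Strategies for the cloning game\<close>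

lemma expect_kron_outcomes:
  assumes state: "density (m * n) \<rho>"
    and c: "a0 \<in> carrier_mat m m" "a1 \<in> carrier_mat m m" "b0 \<in> carrier_mat n n" "b1 \<in> carrier_mat n n"
    and sa: "a0 + a1 = 1\<^sub>m m" and sb: "b0 + b1 = 1\<^sub>m n"
  shows "expect \<rho> (kron a0 b0) + expect \<rho> (kron a1 b1) = (1 + expect \<rho> (kron (a0 - a1) (b0 - b1))) / 2"
    "expect \<rho> (kron a0 b1) + expect \<rho> (kron a1 b0) = (1 - expect \<rho> (kron (a0 - a1) (b0 - b1))) / 2"
proof -
  note psd = density_psd[OF state]
  have "1 = expect \<rho> (kron (a0 + a1) (b0 + b1))"
    unfolding sa sb kron_one using expect_one[OF state] by simp
  also have "\<dots> = expect \<rho> (kron a0 b0) + expect \<rho> (kron a0 b1) + (expect \<rho> (kron a1 b0) + expect \<rho> (kron a1 b1))"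
    using c by (simp add: kron_distribs expect_add[OF psd])
  finally have "1 = expect \<rho> (kron a0 b0) + expect \<rho> (kron a0 b1) + (expect \<rho> (kron a1 b0) + expect \<rho> (kron a1 b1))" .
  moreover have "expect \<rho> (kron (a0 - a1) (b0 - b1)) = expect \<rho> (kron a0 b0) - expect \<rho> (kron a0 b1)
      - (expect \<rho> (kron a1 b0) - expect \<rho> (kron a1 b1))"
    using c by (simp add: kron_distribs expect_minus[OF psd] minus_carrier_mat)
  ultimately show "expect \<rho> (kron a0 b0) + expect \<rho> (kron a1 b1) = (1 + expect \<rho> (kron (a0 - a1) (b0 - b1))) / 2"
    "expect \<rho> (kron a0 b1) + expect \<rho> (kron a1 b0) = (1 - expect \<rho> (kron (a0 - a1) (b0 - b1))) / 2"
    by simp_all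
qed

lemma expect_kron3_agreement:
  assumes state: "density (a * (p * q)) \<sigma>"
    and c: "a0 \<in> carrier_mat a a" "a1 \<in> carrier_mat a a" "p0 \<in> carrier_mat p p" "p1 \<in> carrier_mat p p"
          "q0 \<in> carrier_mat q q" "q1 \<in> carrier_mat q q"
    and sa: "a0 + a1 = 1\<^sub>m a" and sp: "p0 + p1 = 1\<^sub>m p" and sq: "q0 + q1 = 1\<^sub>m q"
  shows "expect \<sigma> (kron a0 (kron p0 q0)) + expect \<sigma> (kron a1 (kron p1 q1)) =
     (1 + expect \<sigma> (kron (a0 - a1) (kron (p0 - p1) (1\<^sub>m q)))
        + expect \<sigma> (kron (a0 - a1) (kron (1\<^sub>m p) (q0 - q1)))
        + expect \<sigma> (kron (1\<^sub>m a) (kron (p0 - p1) (q0 - q1)))) / 4"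
proof -
  note psd = density_psd[OF state]
  note lin = kron_distribs expect_add[OF psd] expect_minus[OF psd] minus_carrier_mat
  let ?E = "\<lambda>x y z. expect \<sigma> (kron x (kron y z))"
  have "1 = expect \<sigma> (kron (a0 + a1) (kron (p0 + p1) (q0 + q1)))"
    unfolding sa sp sq kron_one using expect_one[OF state] by simp
  then have "1 = ?E a0 p0 q0 + ?E a0 p0 q1 + (?E a0 p1 q0 + ?E a0 p1 q1)
      + (?E a1 p0 q0 + ?E a1 p0 q1 + (?E a1 p1 q0 + ?E a1 p1 q1))"
    using c by (simp add: lin)
  moreover have "expect \<sigma> (kron (a0 - a1) (kron (p0 - p1) (1\<^sub>m q))) =
      ?E a0 p0 q0 + ?E a0 p0 q1 - (?E a0 p1 q0 + ?E a0 p1 q1)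
      - (?E a1 p0 q0 + ?E a1 p0 q1 - (?E a1 p1 q0 + ?E a1 p1 q1))"
    unfolding sq[symmetric] using c by (simp add: lin)
  moreover have "expect \<sigma> (kron (a0 - a1) (kron (1\<^sub>m p) (q0 - q1))) =
      ?E a0 p0 q0 - ?E a0 p0 q1 + (?E a0 p1 q0 - ?E a0 p1 q1)
      - (?E a1 p0 q0 - ?E a1 p0 q1 + (?E a1 p1 q0 - ?E a1 p1 q1))"
    unfolding sp[symmetric] using c by (simp add: lin)
  moreover have "expect \<sigma> (kron (1\<^sub>m a) (kron (p0 - p1) (q0 - q1))) =
      ?E a0 p0 q0 - ?E a0 p0 q1 - (?E a0 p1 q0 - ?E a0 p1 q1)
      + (?E a1 p0 q0 - ?E a1 p0 q1 - (?E a1 p1 q0 - ?E a1 p1 q1))"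
    unfolding sa[symmetric] using c by (simp add: lin)
  ultimately show ?thesis by simp
qed

lemma ctrace_kron_instrument_marginal:
  assumes \<rho>: "\<rho> \<in> carrier_mat (dA * dB) (dA * dB)" and Y: "Y \<in> carrier_mat dA dA"
    and K: "\<And>i. i \<in> I \<Longrightarrow> K i \<in> carrier_mat e dB"
    and complete: "msum dB dB (\<lambda>i. adj (K i) * K i) I = 1\<^sub>m dB"
  shows "ctrace (kron Y (1\<^sub>m e) *
      msum (dA * e) (dA * e) (\<lambda>i. kron (1\<^sub>m dA) (K i) * \<rho> * adj (kron (1\<^sub>m dA) (K i))) I)
    = ctrace (kron Y (1\<^sub>m dB) * \<rho>)"
proof -
  let ?Kt = "\<lambda>i. kron (1\<^sub>m dA) (K i)"
  have Kt: "?Kt i \<in> carrier_mat (dA * e) (dA * dB)" if "i \<in> I" for i using K[OF that] by simp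
  have Yt: "kron Y (1\<^sub>m e) \<in> carrier_mat (dA * e) (dA * e)" using Y by simp
  have Ct: "?Kt i * \<rho> * adj (?Kt i) \<in> carrier_mat (dA * e) (dA * e)" if "i \<in> I" for i
    using Kt[OF that] \<rho> by (auto intro!: mult_carrier_mat[of _ _ "dA * dB"])
  have KK: "adj (K i) * K i \<in> carrier_mat dB dB" if "i \<in> I" for i
    using K[OF that] by (auto intro!: mult_carrier_mat[of _ dB e])
  have summand: "ctrace (kron Y (1\<^sub>m e) * (?Kt i * \<rho> * adj (?Kt i))) = ctrace (kron Y (adj (K i) * K i) * \<rho>)"
    if i: "i \<in> I" for i
  proof -
    have "ctrace (kron Y (1\<^sub>m e) * (?Kt i * \<rho> * adj (?Kt i))) = ctrace ((kron Y (1\<^sub>m e) * ?Kt i * \<rho>) * adj (?Kt i))"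
      using K[OF i] Y \<rho> by (simp add: assoc_mult_dim)
    also have "\<dots> = ctrace (adj (?Kt i) * (kron Y (1\<^sub>m e) * ?Kt i * \<rho>))"
      by (rule ctrace_mult_commute[of _ "dA * e" "dA * dB"]) (use Kt[OF i] Yt \<rho> in auto)
    also have "adj (?Kt i) * (kron Y (1\<^sub>m e) * ?Kt i * \<rho>) = (adj (?Kt i) * kron Y (1\<^sub>m e) * ?Kt i) * \<rho>"
      using K[OF i] Y \<rho> by (simp add: assoc_mult_dim)
    also have "adj (?Kt i) * kron Y (1\<^sub>m e) * ?Kt i = kron Y (adj (K i) * K i)"
      unfolding adj_kron using Y K[OF i] by (simp add: kron_mult_kron)
    finally show ?thesis .
  qed
  have "kron Y (1\<^sub>m e) * msum (dA * e) (dA * e) (\<lambda>i. ?Kt i * \<rho> * adj (?Kt i)) I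
      = msum (dA * e) (dA * e) (\<lambda>i. kron Y (1\<^sub>m e) * (?Kt i * \<rho> * adj (?Kt i))) I"
    by (rule mult_msum[OF Yt Ct])
  then have "ctrace (kron Y (1\<^sub>m e) * msum (dA * e) (dA * e) (\<lambda>i. ?Kt i * \<rho> * adj (?Kt i)) I)
      = (\<Sum>i\<in>I. ctrace (kron Y (1\<^sub>m e) * (?Kt i * \<rho> * adj (?Kt i))))"
    using ctrace_msum[OF mult_carrier_mat[OF Yt Ct]] by simp
  also have "\<dots> = (\<Sum>i\<in>I. ctrace (kron Y (adj (K i) * K i) * \<rho>))"
    using summand by simp
  also have "\<dots> = ctrace (msum (dA * dB) (dA * dB) (\<lambda>i. kron Y (adj (K i) * K i)) I * \<rho>)"
    using Y KK \<rho>
    by (subst msum_mult[of _ _ "dA * dB"]) (auto intro!: ctrace_msum[symmetric] mult_carrier_mat[of _ _ "dA * dB"])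
  also have "msum (dA * dB) (dA * dB) (\<lambda>i. kron Y (adj (K i) * K i)) I = kron Y (1\<^sub>m dB)"
    using kron_msum_right[of I "\<lambda>i. adj (K i) * K i" dB dB Y] KK Y complete by simp
  finally show ?thesis .
qed

locale clone_game_strategy =
  fixes dA dB dP dQ nK :: nat and \<rho> :: "complex mat" and A :: "nat \<Rightarrow> nat \<Rightarrow> complex mat"
    and K :: "nat option \<Rightarrow> nat \<Rightarrow> nat \<Rightarrow> complex mat" and P Q :: "nat \<Rightarrow> nat \<Rightarrow> complex mat"
  assumes strategy: "clone_strategy dA dB dP dQ nK \<rho> A K P Q"
begin

abbreviation dBC :: nat where "dBC \<equiv> dP * dQ"

definition barlie_effect :: "nat option \<Rightarrow> nat \<Rightarrow> complex mat" where
  "barlie_effect u s = msum dB dB (\<lambda>k. adj (K u s k) * K u s k) {..<nK}"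

text \<open>The state of Alice, Bob and Charlie after Barlie's instrument in the keep round, summed over
  his outcome \<open>s\<close>, which the keep condition ignores.\<close>

definition kept_state :: "complex mat" where
  "kept_state = msum (dA * dBC) (dA * dBC)
     (\<lambda>i. kron (1\<^sub>m dA) (K None (fst i) (snd i)) * \<rho> * adj (kron (1\<^sub>m dA) (K None (fst i) (snd i))))
     ({0, 1} \<times> {..<nK})"

definition alice_obs :: "nat \<Rightarrow> complex mat" where "alice_obs x = A x 0 - A x 1"
definition barlie_obs :: "nat \<Rightarrow> complex mat" where
  "barlie_obs u = barlie_effect (Some u) 0 - barlie_effect (Some u) 1"
definition bob_obs :: "nat \<Rightarrow> complex mat" where "bob_obs x = P x 0 - P x 1"
definition charlie_obs :: "nat \<Rightarrow> complex mat" where "charlie_obs x = Q x 0 - Q x 1"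

definition alice_round1 :: "nat \<Rightarrow> complex mat" where "alice_round1 x = kron (alice_obs x) (1\<^sub>m dB)"
definition barlie_round1 :: "nat \<Rightarrow> complex mat" where "barlie_round1 u = kron (1\<^sub>m dA) (barlie_obs u)"
definition alice_kept :: "nat \<Rightarrow> complex mat" where "alice_kept x = kron (alice_obs x) (1\<^sub>m dBC)"
definition bob_kept :: "nat \<Rightarrow> complex mat" where
  "bob_kept x = kron (1\<^sub>m dA) (kron (bob_obs x) (1\<^sub>m dQ))"
definition charlie_kept :: "nat \<Rightarrow> complex mat" where
  "charlie_kept x = kron (1\<^sub>m dA) (kron (1\<^sub>m dP) (charlie_obs x))"

lemma density_\<rho>: "density (dA * dB) \<rho>"
  using strategy unfolding clone_strategy_def by simp

lemma \<rho>_carrier: "\<rho> \<in> carrier_mat (dA * dB) (dA * dB)"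
  using psd_carrier density_psd[OF density_\<rho>] .

lemma povms:
  assumes "x \<in> {0, 1}"
  shows "povm2 dA (A x)" "povm2 dP (P x)" "povm2 dQ (Q x)"
  using strategy assms unfolding clone_strategy_def by auto

lemma povm_carriers:
  assumes "x \<in> {0, 1}" "a \<in> {0, 1}"
  shows "A x a \<in> carrier_mat dA dA" "P x a \<in> carrier_mat dP dP" "Q x a \<in> carrier_mat dQ dQ"
  using povms[OF assms(1)] assms(2) psd_carrier unfolding povm2_def by auto

lemma kraus_carrier:
  "u \<in> {Some 0, Some 1, None} \<Longrightarrow> s \<in> {0, 1} \<Longrightarrow> k < nK \<Longrightarrow> K u s k \<in> carrier_mat dBC dB"
  using strategy unfolding clone_strategy_def by blast

lemma kraus_complete:
  "u \<in> {Some 0, Some 1, None} \<Longrightarrow>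
    msum dB dB (\<lambda>(s, k). adj (K u s k) * K u s k) ({0::nat, 1} \<times> {..<nK}) = 1\<^sub>m dB"
  using strategy unfolding clone_strategy_def by blast

lemma barlie_povm:
  assumes "u \<in> {Some 0, Some 1, None}"
  shows "povm2 dB (barlie_effect u)"
  unfolding povm2_def
proof (intro conjI)
  have "psd dB (barlie_effect u s)" if "s \<in> {0, 1}" for s
    unfolding barlie_effect_def
    using kraus_carrier[OF assms that] psd_mult_adj[of "adj (K u s _)" dB dBC] by (auto intro!: psd_msum)
  then show "psd dB (barlie_effect u 0)" "psd dB (barlie_effect u 1)" by auto
  show "barlie_effect u 0 + barlie_effect u 1 = 1\<^sub>m dB"
    using kraus_complete[OF assms] msum_bit_times[of dB dB "\<lambda>s k. adj (K u s k) * K u s k"]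
    unfolding barlie_effect_def by simp
qed

lemma observables:
  assumes "x \<in> {0, 1}"
  shows "observable dA (alice_obs x)" "observable dB (barlie_obs x)"
    "observable dP (bob_obs x)" "observable dQ (charlie_obs x)"
  using observable_difference_of_effects povms[OF assms] barlie_povm[of "Some x"] assms
  unfolding alice_obs_def barlie_obs_def bob_obs_def charlie_obs_def by auto

lemma joint_observables:
  assumes "x \<in> {0, 1}"
  shows "observable (dA * dB) (alice_round1 x)" "observable (dA * dB) (barlie_round1 x)"
    "observable (dA * dBC) (alice_kept x)" "observable (dA * dBC) (bob_kept x)"
    "observable (dA * dBC) (charlie_kept x)"
  unfolding alice_round1_def barlie_round1_def alice_kept_def bob_kept_def charlie_kept_def
  using observables[OF assms]
  by (auto intro: observable_kron_one_right observable_kron_one_left)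

lemma state_inner_round1:
  assumes "x \<in> {0, 1}" "u \<in> {0, 1}"
  shows "state_inner \<rho> (alice_round1 x) (barlie_round1 u) = expect \<rho> (kron (alice_obs x) (barlie_obs u))"
  using observables[OF assms(1)] observables[OF assms(2)]
  unfolding state_inner_def alice_round1_def barlie_round1_def observable_def
  by (simp add: adj_kron kron_one_mult_commute)

lemma round1_win_prob:
  assumes x: "x \<in> {0, 1}" and u: "u \<in> {0, 1}"
  shows "(\<Sum>a\<in>{0::nat, 1}. \<Sum>s\<in>{0::nat, 1}.
      if (a + s) mod 2 = x * u then round1_prob dA dB nK \<rho> A K x a (Some u) s else 0)
    = (1 + (-1) ^ (x * u) * state_inner \<rho> (alice_round1 x) (barlie_round1 u)) / 2"
proof -
  have E: "round1_prob dA dB nK \<rho> A K x a (Some u) s = expect \<rho> (kron (A x a) (barlie_effect (Some u) s))"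
    for a s
    unfolding round1_prob_def expect_def barlie_effect_def ..
  have B: "barlie_effect (Some u) s \<in> carrier_mat dB dB" for s
    unfolding barlie_effect_def by simp
  have sums: "A x 0 + A x 1 = 1\<^sub>m dA" "barlie_effect (Some u) 0 + barlie_effect (Some u) 1 = 1\<^sub>m dB"
    using povms(1)[OF x] barlie_povm[of "Some u"] u unfolding povm2_def by auto
  note outcomes = expect_kron_outcomes[OF density_\<rho> povm_carriers(1)[OF x, of 0] povm_carriers(1)[OF x, of 1]
      B B sums]
  define c where "c = x * u"
  have "c = 0 \<or> c = 1" using x u unfolding c_def by auto
  then show ?thesis
    unfolding E state_inner_round1[OF x u] alice_obs_def barlie_obs_def c_def[symmetric]
    using outcomes[unfolded One_nat_def] by (elim disjE) simp_all
qed

lemma kept_state_marginal: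
  assumes "Y \<in> carrier_mat dA dA"
  shows "ctrace (kron Y (1\<^sub>m dBC) * kept_state) = ctrace (kron Y (1\<^sub>m dB) * \<rho>)"
  unfolding kept_state_def
proof (rule ctrace_kron_instrument_marginal[OF \<rho>_carrier assms])
  show "K None (fst i) (snd i) \<in> carrier_mat dBC dB" if "i \<in> {0, 1} \<times> {..<nK}" for i
    using kraus_carrier that by auto
  show "msum dB dB (\<lambda>i. adj (K None (fst i) (snd i)) * K None (fst i) (snd i)) ({0, 1} \<times> {..<nK}) = 1\<^sub>m dB"
    using kraus_complete[of None] by (simp add: case_prod_unfold)
qed

lemma density_kept_state: "density (dA * dBC) kept_state"
proof -
  have "psd (dA * dBC) kept_state"
    unfolding kept_state_def
    using psd_congruence[OF density_psd[OF density_\<rho>]] kraus_carrier by (auto intro!: psd_msum)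
  moreover have "ctrace kept_state = 1"
    using kept_state_marginal[of "1\<^sub>m dA"] density_\<rho> \<rho>_carrier
    unfolding kron_one density_def by (simp add: kept_state_def)
  ultimately show ?thesis unfolding density_def by simp
qed

definition keep_agreement :: "nat \<Rightarrow> real" where
  "keep_agreement x = state_inner kept_state (alice_kept x) (bob_kept x)
     + state_inner kept_state (alice_kept x) (charlie_kept x) + state_inner kept_state (bob_kept x) (charlie_kept x)"

lemma keep_prob_sum:
  assumes x: "x \<in> {0, 1}" and a: "a \<in> {0, 1}"
  shows "(\<Sum>s\<in>{0::nat, 1}. keep_prob dA dP dQ nK \<rho> A K P Q x a s)
    = expect kept_state (kron (A x a) (kron (P x a) (Q x a)))"
proof -
  define M where "M = kron (A x a) (kron (P x a) (Q x a))"
  define S where "S s = msum (dA * dBC) (dA * dBC)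
      (\<lambda>k. kron (1\<^sub>m dA) (K None s k) * \<rho> * adj (kron (1\<^sub>m dA) (K None s k))) {..<nK}" for s
  have M: "M \<in> carrier_mat (dA * dBC) (dA * dBC)" unfolding M_def using povm_carriers[OF x a] by simp
  have "kept_state = S 0 + S 1"
    unfolding kept_state_def S_def
    using msum_bit_times[of "dA * dBC" "dA * dBC"
        "\<lambda>s k. kron (1\<^sub>m dA) (K None s k) * \<rho> * adj (kron (1\<^sub>m dA) (K None s k))" "{..<nK}"]
    by (simp add: case_prod_unfold)
  then have "M * kept_state = M * S 0 + M * S 1"
    using M by (simp add: mult_add_distrib_dim S_def)
  then have "expect kept_state M = Re (ctrace (M * S 0)) + Re (ctrace (M * S 1))"
    unfolding expect_def using M by (simp add: ctrace_add S_def)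
  then show ?thesis unfolding M_def S_def keep_prob_def expect_def by simp
qed

lemma keep_win_prob:
  assumes x: "x \<in> {0, 1}"
  shows "(\<Sum>a\<in>{0::nat, 1}. \<Sum>s\<in>{0::nat, 1}. keep_prob dA dP dQ nK \<rho> A K P Q x a s) = (1 + keep_agreement x) / 4"
proof -
  have sums: "A x 0 + A x 1 = 1\<^sub>m dA" "P x 0 + P x 1 = 1\<^sub>m dP" "Q x 0 + Q x 1 = 1\<^sub>m dQ"
    using povms[OF x] unfolding povm2_def by auto
  have obs: "alice_obs x \<in> carrier_mat dA dA" "bob_obs x \<in> carrier_mat dP dP" "charlie_obs x \<in> carrier_mat dQ dQ"
    "adj (alice_kept x) = alice_kept x" "adj (bob_kept x) = bob_kept x"
    using observables[OF x] joint_observables[OF x] unfolding observable_def by auto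
  have "alice_kept x * bob_kept x = kron (alice_obs x) (kron (bob_obs x) (1\<^sub>m dQ))"
    "alice_kept x * charlie_kept x = kron (alice_obs x) (kron (1\<^sub>m dP) (charlie_obs x))"
    "bob_kept x * charlie_kept x = kron (1\<^sub>m dA) (kron (bob_obs x) (charlie_obs x))"
    unfolding alice_kept_def bob_kept_def charlie_kept_def using obs by (simp_all add: kron_mult_kron)
  then have "keep_agreement x = expect kept_state (kron (alice_obs x) (kron (bob_obs x) (1\<^sub>m dQ)))
      + expect kept_state (kron (alice_obs x) (kron (1\<^sub>m dP) (charlie_obs x)))
      + expect kept_state (kron (1\<^sub>m dA) (kron (bob_obs x) (charlie_obs x)))"
    unfolding keep_agreement_def state_inner_def using obs(4,5) by simp
  moreover have "(\<Sum>a\<in>{0::nat, 1}. \<Sum>s\<in>{0::nat, 1}. keep_prob dA dP dQ nK \<rho> A K P Q x a s)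
      = expect kept_state (kron (A x 0) (kron (P x 0) (Q x 0))) + expect kept_state (kron (A x 1) (kron (P x 1) (Q x 1)))"
    using keep_prob_sum[OF x] by simp
  moreover have "A x a \<in> carrier_mat dA dA" "P x a \<in> carrier_mat dP dP" "Q x a \<in> carrier_mat dQ dQ"
    if "a \<in> {0, 1}" for a
    using povm_carriers[OF x that] by auto
  ultimately show ?thesis
    using expect_kron3_agreement[OF density_kept_state _ _ _ _ _ _ sums]
    unfolding alice_obs_def bob_obs_def charlie_obs_def by simp
qed

lemma kept_anticommutator_norm:
  "state_norm2 kept_state (alice_kept 0 * alice_kept 1 + alice_kept 1 * alice_kept 0) =
   state_norm2 \<rho> (alice_round1 0 * alice_round1 1 + alice_round1 1 * alice_round1 0)"
proof -
  define Z where "Z = alice_obs 0 * alice_obs 1 + alice_obs 1 * alice_obs 0"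
  have A: "alice_obs 0 \<in> carrier_mat dA dA" "alice_obs 1 \<in> carrier_mat dA dA"
    using observables(1)[of 0] observables(1)[of 1] unfolding observable_def by auto
  then have Z: "Z \<in> carrier_mat dA dA" "adj Z * Z \<in> carrier_mat dA dA" unfolding Z_def by auto
  have "alice_kept 0 * alice_kept 1 + alice_kept 1 * alice_kept 0 = kron Z (1\<^sub>m dBC)"
    "alice_round1 0 * alice_round1 1 + alice_round1 1 * alice_round1 0 = kron Z (1\<^sub>m dB)"
    unfolding alice_kept_def alice_round1_def Z_def using A by (simp_all add: kron_mult_kron kron_add_left)
  moreover have "state_norm2 \<sigma> (kron Z (1\<^sub>m d)) = Re (ctrace (kron (adj Z * Z) (1\<^sub>m d) * \<sigma>))" for \<sigma> d
    unfolding state_norm2_def state_inner_def expect_def adj_kron using Z by (simp add: kron_mult_kron)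
  ultimately show ?thesis using kept_state_marginal[OF Z(2)] by simp
qed

definition chsh_deficit :: real where
  "chsh_deficit = 2 * sqrt 2 - chsh_correlation \<rho> (alice_round1 0) (alice_round1 1) (barlie_round1 0) (barlie_round1 1)"

definition keep_deficit :: real where
  "keep_deficit = (3 - keep_agreement 0) + (3 - keep_agreement 1)"

lemma chsh_deficit_nonneg: "chsh_deficit \<ge> 0"
  using tsirelson_bound[OF density_\<rho> joint_observables(1)[of 0] joint_observables(1)[of 1]
      joint_observables(2)[of 0] joint_observables(2)[of 1]]
  unfolding chsh_deficit_def by simp

lemma keep_deficit_nonneg: "keep_deficit \<ge> 0"
  using state_inner_observables_le_1[OF density_kept_state] joint_observables[of 0] joint_observables[of 1]
  unfolding keep_deficit_def keep_agreement_def by (smt (verit) insertI1 insertI2 singletonI)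

lemma clone_win_prob_eq:
  "clone_win_prob \<gamma> \<alpha> dA dB dP dQ nK \<rho> A K P Q =
    (1 - \<gamma>) + \<gamma> * chsh_value - \<gamma> / 8 * chsh_deficit - (1 - \<gamma>) * (1 - \<alpha>)\<^sup>2 / 8 * keep_deficit"
proof -
  define R where "R x u = (\<Sum>a\<in>{0::nat, 1}. \<Sum>s\<in>{0::nat, 1}.
      if (a + s) mod 2 = x * u then round1_prob dA dB nK \<rho> A K x a (Some u) s else 0)" for x u
  define W where "W x = (\<Sum>a\<in>{0::nat, 1}. \<Sum>s\<in>{0::nat, 1}. keep_prob dA dP dQ nK \<rho> A K P Q x a s)" for x
  have "clone_win_prob \<gamma> \<alpha> dA dB dP dQ nK \<rho> A K P Q =
      (1/2) * ((\<gamma>/2) * (R 0 0 + R 0 1) + (1 - \<gamma>) * ((1 - (1 - \<alpha>)\<^sup>2) + (1 - \<alpha>)\<^sup>2 * W 0))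
    + (1/2) * ((\<gamma>/2) * (R 1 0 + R 1 1) + (1 - \<gamma>) * ((1 - (1 - \<alpha>)\<^sup>2) + (1 - \<alpha>)\<^sup>2 * W 1))"
    unfolding clone_win_prob_def R_def W_def by (simp add: algebra_simps)
  moreover have "R x u = (1 + (-1) ^ (x * u) * state_inner \<rho> (alice_round1 x) (barlie_round1 u)) / 2"
    if "x \<in> {0, 1}" "u \<in> {0, 1}" for x u
    unfolding R_def using round1_win_prob that .
  moreover have "W x = (1 + keep_agreement x) / 4" if "x \<in> {0, 1}" for x
    unfolding W_def using keep_win_prob that .
  moreover have "\<gamma> * chsh_value = \<gamma> / 2 + \<gamma> * (2 * sqrt 2) / 8"
  proof -
    have "1 / sqrt 2 = sqrt 2 / (2::real)" by (simp add: field_simps)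
    then show ?thesis unfolding chsh_value_def by (simp add: field_simps)
  qed
  ultimately show ?thesis
    unfolding chsh_deficit_def keep_deficit_def chsh_correlation_def by (simp add: field_simps)
qed

lemma kept_observables_commute:
  assumes "x \<in> {0, 1}" "y \<in> {0, 1}"
  shows "charlie_kept y * alice_kept x = alice_kept x * charlie_kept y"
    "bob_kept y * alice_kept x = alice_kept x * bob_kept y"
    "charlie_kept y * bob_kept x = bob_kept x * charlie_kept y"
proof -
  have c: "alice_obs x \<in> carrier_mat dA dA" "bob_obs x \<in> carrier_mat dP dP"
      "bob_obs y \<in> carrier_mat dP dP" "charlie_obs y \<in> carrier_mat dQ dQ"
    using observables[OF assms(1)] observables[OF assms(2)] unfolding observable_def by auto
  show "charlie_kept y * alice_kept x = alice_kept x * charlie_kept y"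
    "bob_kept y * alice_kept x = alice_kept x * bob_kept y"
    unfolding alice_kept_def bob_kept_def charlie_kept_def
    using c kron_one_mult_commute[of "alice_obs x" dA "kron (1\<^sub>m dP) (charlie_obs y)" dBC]
      kron_one_mult_commute[of "alice_obs x" dA "kron (bob_obs y) (1\<^sub>m dQ)" dBC] by auto
  show "charlie_kept y * bob_kept x = bob_kept x * charlie_kept y"
    unfolding bob_kept_def charlie_kept_def using c by (simp add: kron_mult_kron)
qed

lemma round1_observables_commute:
  assumes "x \<in> {0, 1}" "u \<in> {0, 1}"
  shows "barlie_round1 u * alice_round1 x = alice_round1 x * barlie_round1 u"
  using kron_one_mult_commute[of "alice_obs x" dA "barlie_obs u" dB] observables[OF assms(1)]
    observables[OF assms(2)]
  unfolding alice_round1_def barlie_round1_def observable_def by auto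

lemma bob_charlie_defects_psd:
  "psd (dA * dBC) ((1\<^sub>m (dA * dBC) - bob_kept 0 * bob_kept 0) * (1\<^sub>m (dA * dBC) - charlie_kept 1 * charlie_kept 1))"
proof -
  have P: "bob_obs 0 \<in> carrier_mat dP dP" "psd dP (1\<^sub>m dP - bob_obs 0 * bob_obs 0)"
    and Q: "charlie_obs 1 \<in> carrier_mat dQ dQ" "psd dQ (1\<^sub>m dQ - charlie_obs 1 * charlie_obs 1)"
    using observables[of 0] observables[of 1] unfolding observable_def by auto
  have "1\<^sub>m (dA * dBC) - bob_kept 0 * bob_kept 0 = kron (1\<^sub>m dA) (kron (1\<^sub>m dP - bob_obs 0 * bob_obs 0) (1\<^sub>m dQ))"
    unfolding bob_kept_def using P by (simp add: kron_mult_kron kron_one[symmetric] kron_minus_right kron_minus_left)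
  moreover have "1\<^sub>m (dA * dBC) - charlie_kept 1 * charlie_kept 1 =
      kron (1\<^sub>m dA) (kron (1\<^sub>m dP) (1\<^sub>m dQ - charlie_obs 1 * charlie_obs 1))"
    unfolding charlie_kept_def using Q by (simp add: kron_mult_kron kron_one[symmetric] kron_minus_right)
  ultimately have "(1\<^sub>m (dA * dBC) - bob_kept 0 * bob_kept 0) * (1\<^sub>m (dA * dBC) - charlie_kept 1 * charlie_kept 1)
      = kron (1\<^sub>m dA) (kron (1\<^sub>m dP - bob_obs 0 * bob_obs 0) (1\<^sub>m dQ - charlie_obs 1 * charlie_obs 1))"
    using P Q by (simp add: kron_mult_kron)
  then show ?thesis using psd_kron[OF psd_one psd_kron[OF P(2) Q(2)]] by simp
qed

lemma deficits_tradeoff: "2 \<le> 34 * chsh_deficit + 20 * keep_deficit"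
proof -
  have "2 - 20 * ((1 - state_inner kept_state (alice_kept 0) (bob_kept 0))
      + (1 - state_inner kept_state (alice_kept 1) (charlie_kept 1)))
    \<le> state_norm2 kept_state (alice_kept 0 * alice_kept 1 + alice_kept 1 * alice_kept 0)"
    using cloning_anticommutator_ge[OF density_kept_state joint_observables(3)[of 0] joint_observables(3)[of 1]
        joint_observables(4)[of 0] joint_observables(5)[of 1] kept_observables_commute(1)[of 0 1]
        kept_observables_commute(2)[of 1 0] kept_observables_commute(3)[of 0 1] bob_charlie_defects_psd]
    by simp
  also have "\<dots> = state_norm2 \<rho> (alice_round1 0 * alice_round1 1 + alice_round1 1 * alice_round1 0)"
    by (rule kept_anticommutator_norm)
  also have "\<dots> \<le> 34 * chsh_deficit"
    unfolding chsh_deficit_def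
    by (rule anticommutator_le_chsh_deficit[OF density_\<rho> joint_observables(1)[of 0] joint_observables(1)[of 1]
        joint_observables(2)[of 0] joint_observables(2)[of 1]])
      (auto intro: round1_observables_commute)
  moreover have "(1 - state_inner kept_state (alice_kept 0) (bob_kept 0))
      + (1 - state_inner kept_state (alice_kept 1) (charlie_kept 1)) \<le> keep_deficit"
    using state_inner_observables_le_1[OF density_kept_state] joint_observables[of 0] joint_observables[of 1]
    unfolding keep_deficit_def keep_agreement_def by (smt (z3) insertI1 insertI2 singletonI)
  ultimately show ?thesis by (smt (z3))
qed

lemma clone_win_prob_le:
  assumes "0 \<le> \<gamma>" "\<gamma> \<le> 1"
  shows "clone_win_prob \<gamma> \<alpha> dA dB dP dQ nK \<rho> A K P Q
    \<le> (1 - \<gamma>) + \<gamma> * chsh_value - min \<gamma> ((1 - \<gamma>) * (1 - \<alpha>)\<^sup>2) / 136"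
proof -
  define m where "m = min \<gamma> ((1 - \<gamma>) * (1 - \<alpha>)\<^sup>2)"
  have "1 \<le> 17 * chsh_deficit + 17 * keep_deficit"
    using deficits_tradeoff keep_deficit_nonneg by linarith
  moreover have "m \<ge> 0" unfolding m_def using assms by simp
  ultimately have "m * 1 \<le> m * (17 * chsh_deficit + 17 * keep_deficit)"
    by (rule mult_left_mono)
  then have "m / 136 \<le> m / 8 * chsh_deficit + m / 8 * keep_deficit"
    by (simp add: field_simps)
  also have "\<dots> \<le> \<gamma> / 8 * chsh_deficit + (1 - \<gamma>) * (1 - \<alpha>)\<^sup>2 / 8 * keep_deficit"
    unfolding m_def using chsh_deficit_nonneg keep_deficit_nonneg
    by (intro add_mono mult_right_mono divide_right_mono) auto
  finally show ?thesis unfolding clone_win_prob_eq m_def by simp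
qed

end

text \<open>Needed because \<open>Sup {}\<close> is a junk value of type \<open>real\<close>.\<close>

lemma clone_strategy_exists: "\<exists>dA dB dP dQ nK \<rho> A K P Q. clone_strategy dA dB dP dQ nK \<rho> A K P Q"
proof -
  let ?E = "\<lambda>a :: nat. if a = 0 then 1\<^sub>m 1 else 0\<^sub>m 1 1 :: complex mat"
  have "0\<^sub>m 1 1 = 0\<^sub>m 1 1 * adj (0\<^sub>m 1 1 :: complex mat)" by (intro eq_matI) (auto simp: scalar_prod_def)
  then have "psd 1 (0\<^sub>m 1 1)" using psd_mult_adj[of "0\<^sub>m 1 1" 1 1] by simp
  then have povm: "povm2 1 ?E" unfolding povm2_def using psd_one[of 1] by (auto intro!: eq_matI)
  have "msum 1 1 (\<lambda>(s, k). adj (?E s) * ?E s) ({0::nat, 1} \<times> {..<1::nat}) = 1\<^sub>m 1"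
    unfolding msum_bit_times by (intro eq_matI) (auto simp: scalar_prod_def)
  then have "clone_strategy 1 1 1 1 1 (1\<^sub>m 1) (\<lambda>x. ?E) (\<lambda>u s k. ?E s) (\<lambda>x. ?E) (\<lambda>x. ?E)"
    unfolding clone_strategy_def density_def using povm psd_one[of 1] by (auto simp: ctrace_def)
  then show ?thesis by blast
qed

theorem theorem18:
  fixes \<gamma> \<alpha> :: real
  assumes "0 < \<gamma>" "\<gamma> < 1" "0 < \<alpha>" "\<alpha> < 1"
  shows "\<exists>\<delta> > 0. clone_value \<gamma> \<alpha> \<le> (1 - \<gamma>) + \<gamma> * chsh_value - \<delta>"
proof -
  define \<delta> where "\<delta> = min \<gamma> ((1 - \<gamma>) * (1 - \<alpha>)\<^sup>2) / 136"
  have "\<delta> > 0" unfolding \<delta>_def using assms by simp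
  moreover have "clone_value \<gamma> \<alpha> \<le> (1 - \<gamma>) + \<gamma> * chsh_value - \<delta>"
    unfolding clone_value_def \<delta>_def
  proof (rule cSup_least)
    show "{clone_win_prob \<gamma> \<alpha> dA dB dP dQ nK \<rho> A K P Q | dA dB dP dQ nK \<rho> A K P Q.
        clone_strategy dA dB dP dQ nK \<rho> A K P Q} \<noteq> {}"
      using clone_strategy_exists by blast
  next
    fix w assume "w \<in> {clone_win_prob \<gamma> \<alpha> dA dB dP dQ nK \<rho> A K P Q | dA dB dP dQ nK \<rho> A K P Q.
        clone_strategy dA dB dP dQ nK \<rho> A K P Q}"
    then show "w \<le> (1 - \<gamma>) + \<gamma> * chsh_value - min \<gamma> ((1 - \<gamma>) * (1 - \<alpha>)\<^sup>2) / 136"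
      using clone_game_strategy.clone_win_prob_le[OF clone_game_strategy.intro] assms by fastforce
  qed
  ultimately show ?thesis by blast
qed

end
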